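(* Let $(\Omega,\mathcal{F},P_0)$ be a complete probability space, $\epsilon\in(0,1)$, $\mathcal{C}\subseteq\mathcal{F}$ a sub-$\sigma$-algebra, and $\rho$ a sublinear operator on $L^{2+\epsilon}_{\mathcal{F}}(\Omega,P_0)$ with representation set $\mathcal{P}$, satisfying the standing assumptions below, and suppose $\rho$ is stable and proper. For $\xi\in L^{4+2\epsilon}_{\mathcal{F}}(P_0)$ let $\rho(\xi\mid\mathcal{C})$ denote the (unique $P_0$-a.s.) $\hat\eta\in L^{2+\epsilon}_{\mathcal{C}}(P_0)$ with $\rho((\xi-\hat\eta)^2)=\inf_{\eta\in L^{2+\epsilon}_{\mathcal{C}}(P_0)}\rho((\xi-\eta)^2)$. Then for any $\xi\in L^{4+2\epsilon}_{\mathcal{F}}(P_0)$: (i) if $C_1\le\xi\le C_2$ for constants $C_1,C_2$, then $C_1\le\rho(\xi\mid\mathcal{C})\le C_2$; (ii) $\rho(\lambda\xi\mid\mathcal{C})=\lambda\rho(\xi\mid\mathcal{C})$ for every $\lambda\in\mathbb{R}$; (iii) for each $\eta_0\in L^{2+\epsilon}_{\mathcal{C}}(P_0)$, $\rho(\xi+\eta_0\mid\mathcal{C})=\rho(\xi\mid\mathcal{C})+\eta_0$, i.e. $\rho(\xi\mid\mathcal{C})+\eta_0$ is the unique minimizer of $\eta\mapsto\rho((\xi+\eta_0-\eta)^2)$ over $L^{2+\epsilon}_{\mathcal{C}}(P_0)$; (iv) if under each $P\in\mathcal{P}$, $\xi$ is independent of $\mathcal{C}$, then $\rho(\xi\mid\mathcal{C})$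 is a constant.
   Context: A sublinear operator is a map $\rho:L^{2+\epsilon}_{\mathcal{F}}(\Omega,P_0)\to\mathbb{R}$ that is monotone, constant preserving, sub-additive and positively homogeneous. Its representation set $\mathcal{P}$ is the family of all linear expectations (identified with probability measures $P$) dominated by $\rho$, so $\rho(\xi)=\max_{P\in\mathcal{P}}E_P[\xi]$; $\rho((\xi-\eta)^2)$ means $\sup_{P\in\mathcal{P}}E_P[(\xi-\eta)^2]$. Write $f^P=dP/dP_0$, $\mathcal{D}=\{f^P:P\in\mathcal{P}\}$. $\rho$ is proper if every $P\in\mathcal{P}$ is equivalent to $P_0$. Standing assumption: $\mathcal{D}$ is norm-bounded in $L^{1+\frac{2}{\epsilon}}_{\mathcal{F}}(P_0)$ and $\sigma(L^{1+\frac{2}{\epsilon}}(P_0),L^{1+\frac{\epsilon}{2}}(P_0))$-compact. $\rho$ is stable if for each $P\in\mathcal{P}$ the random variable $f^P/E_{P_0}[f^P\mid\mathcal{C}]$ lies in $\mathcal{D}$. $L^{2+\epsilon}_{\mathcal{C}}(P_0)$ denotes the $\mathcal{C}$-measurable elements of $L^{2+\epsilon}(P_0)$. *)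

theory Defs
  imports "HOL-Probability.Probability"
begin

text \<open>Random variables are real functions on the sample space; L^p classes are represented
  by their (measurable) representatives. All order relations between random variables
  are understood P0-almost surely.\<close>

definition Lp :: "'a measure \<Rightarrow> real \<Rightarrow> ('a \<Rightarrow> real) set" where
  "Lp M p = {X. X \<in> borel_measurable M \<and> integrable M (\<lambda>x. \<bar>X x\<bar> powr p)}"

definition Lp_sub :: "'a measure \<Rightarrow> 'a measure \<Rightarrow> real \<Rightarrow> ('a \<Rightarrow> real) set" where
  "Lp_sub M C p = {X. X \<in> Lp M p \<and> X \<in> borel_measurable C}"

definition Lp_norm :: "'a measure \<Rightarrow> real \<Rightarrow> ('a \<Rightarrow> real) \<Rightarrow> real" where
  "Lp_norm M p X = (integral\<^sup>L M (\<lambda>x. \<bar>X x\<bar> powr p)) powr (1 / p)"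

definition sublinear_op :: "'a measure \<Rightarrow> real \<Rightarrow> (('a \<Rightarrow> real) \<Rightarrow> real) \<Rightarrow> bool" where
  "sublinear_op M eps \<rho> \<longleftrightarrow>
     (\<forall>X\<in>Lp M (2+eps). \<forall>Y\<in>Lp M (2+eps). (AE x in M. X x \<le> Y x) \<longrightarrow> \<rho> X \<le> \<rho> Y) \<and>
     (\<forall>c. \<rho> (\<lambda>_. c) = c) \<and>
     (\<forall>X\<in>Lp M (2+eps). \<forall>Y\<in>Lp M (2+eps). \<rho> (\<lambda>x. X x + Y x) \<le> \<rho> X + \<rho> Y) \<and>
     (\<forall>X\<in>Lp M (2+eps). \<forall>l::real. l \<ge> 0 \<longrightarrow> \<rho> (\<lambda>x. l * X x) = l * \<rho> X)"

text \<open>The set D of densities f^P = dP/dP0 of the probability measures P in the representation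
  set: linear expectations on L^(2+eps) dominated by rho.\<close>
definition dens :: "'a measure \<Rightarrow> real \<Rightarrow> (('a \<Rightarrow> real) \<Rightarrow> real) \<Rightarrow> ('a \<Rightarrow> real) set" where
  "dens M eps \<rho> = {f. f \<in> borel_measurable M \<and> (AE x in M. 0 \<le> f x) \<and> integrable M f \<and>
      integral\<^sup>L M f = 1 \<and>
      (\<forall>X\<in>Lp M (2+eps). integrable M (\<lambda>x. f x * X x) \<and> integral\<^sup>L M (\<lambda>x. f x * X x) \<le> \<rho> X)}"

definition dens_meas :: "'a measure \<Rightarrow> ('a \<Rightarrow> real) \<Rightarrow> 'a measure" where
  "dens_meas M f = density M (\<lambda>x. ennreal (f x))"

definition rho_ext :: "'a measure \<Rightarrow> real \<Rightarrow> (('a \<Rightarrow> real) \<Rightarrow> real) \<Rightarrow> ('a \<Rightarrow> real) \<Rightarrow> real" where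
  "rho_ext M eps \<rho> X = (SUP f\<in>dens M eps \<rho>. integral\<^sup>L M (\<lambda>x. f x * X x))"

text \<open>Weak topology sigma(L^p, L^q) on L^p (initial topology of f \<mapsto> E[f g], g in L^q).\<close>
definition weak_top :: "'a measure \<Rightarrow> real \<Rightarrow> real \<Rightarrow> ('a \<Rightarrow> real) topology" where
  "weak_top M p q = pullback_topology (Lp M p)
     (\<lambda>f g. if g \<in> Lp M q then integral\<^sup>L M (\<lambda>x. f x * g x) else 0)
     (product_topology (\<lambda>_. euclideanreal) UNIV)"

definition standing_assm :: "'a measure \<Rightarrow> real \<Rightarrow> (('a \<Rightarrow> real) \<Rightarrow> real) \<Rightarrow> bool" where
  "standing_assm M eps \<rho> \<longleftrightarrow>
     dens M eps \<rho> \<subseteq> Lp M (1 + 2/eps) \<and>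
     (\<exists>B. \<forall>f\<in>dens M eps \<rho>. Lp_norm M (1 + 2/eps) f \<le> B) \<and>
     compactin (weak_top M (1 + 2/eps) (1 + eps/2)) (dens M eps \<rho>)"

definition stable :: "'a measure \<Rightarrow> 'a measure \<Rightarrow> real \<Rightarrow> (('a \<Rightarrow> real) \<Rightarrow> real) \<Rightarrow> bool" where
  "stable M C eps \<rho> \<longleftrightarrow>
     (\<forall>f\<in>dens M eps \<rho>. (\<lambda>x. f x / real_cond_exp M C f x) \<in> dens M eps \<rho>)"

text \<open>Proper: every P in the representation set is equivalent to P0, i.e. f^P > 0 P0-a.s.\<close>
definition proper :: "'a measure \<Rightarrow> real \<Rightarrow> (('a \<Rightarrow> real) \<Rightarrow> real) \<Rightarrow> bool" where
  "proper M eps \<rho> \<longleftrightarrow> (\<forall>f\<in>dens M eps \<rho>. AE x in M. 0 < f x)"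

definition is_cond_min :: "'a measure \<Rightarrow> 'a measure \<Rightarrow> real \<Rightarrow> (('a \<Rightarrow> real) \<Rightarrow> real)
    \<Rightarrow> ('a \<Rightarrow> real) \<Rightarrow> ('a \<Rightarrow> real) \<Rightarrow> bool" where
  "is_cond_min M C eps \<rho> \<xi> \<eta> \<longleftrightarrow> \<eta> \<in> Lp_sub M C (2+eps) \<and>
     rho_ext M eps \<rho> (\<lambda>x. (\<xi> x - \<eta> x)^2) =
       (INF \<zeta>\<in>Lp_sub M C (2+eps). rho_ext M eps \<rho> (\<lambda>x. (\<xi> x - \<zeta> x)^2))"

definition cond_rho :: "'a measure \<Rightarrow> 'a measure \<Rightarrow> real \<Rightarrow> (('a \<Rightarrow> real) \<Rightarrow> real)
    \<Rightarrow> ('a \<Rightarrow> real) \<Rightarrow> ('a \<Rightarrow> real)" where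
  "cond_rho M C eps \<rho> \<xi> = (SOME \<eta>. is_cond_min M C eps \<rho> \<xi> \<eta>)"

end

theory Submission
  imports Defs
begin

text \<open>For a fixed \<open>P = f P\<^sub>0\<close> in the representation set, \<open>E\<^sub>P[(\<xi> - \<eta>)\<^sup>2]\<close> is minimised over
  \<open>L\<^sup>2\<^sup>+\<^sup>\<epsilon>\<^sub>C\<close> by the conditional mean \<open>E\<^sub>P[\<xi>|C] = E[h \<xi>|C]\<close>, where \<open>h = f / E[f|C]\<close>;
  stability puts \<open>h\<close> back into \<open>D\<close>, and a conditional Jensen inequality keeps the conditional
  mean in \<open>L\<^sup>2\<^sup>+\<^sup>\<epsilon>\<close>. This minimal value is an infimum of weakly continuous functions of \<open>f\<close>,
  so it attains its maximum on the weakly compact convex set \<open>D\<close> at some \<open>f\<^sub>0\<close>; perturbing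
  \<open>f\<^sub>0\<close> towards any other density shows that \<open>E\<^sub>f\<^sub>0[\<xi>|C]\<close> minimises
  \<open>\<rho>((\<xi> - \<eta>)\<^sup>2) = max\<^sub>f E\<^sub>f[(\<xi> - \<eta>)\<^sup>2]\<close>. The minimiser is unique by the parallelogram
  identity and properness; \<open>D\<close> is non-empty by Hahn-Banach and Radon-Nikodym.

  Truncation to \<open>[C\<^sub>1, C\<^sub>2]\<close>, scaling and translation by \<open>\<eta>\<^sub>0\<close> map minimisers to minimisers,
  which gives (i)-(iii). For (iv), independence of \<open>\<xi>\<close> and \<open>C\<close> under every \<open>P\<close> makes the constant
  \<open>E\<^sub>P\<^sub>0[\<rho>(\<xi>|C)]\<close> at least as good as \<open>\<rho>(\<xi>|C)\<close> under each \<open>P\<close>.\<close>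

section \<open>Lebesgue spaces\<close>

lemma LpI: "X \<in> borel_measurable M \<Longrightarrow> integrable M (\<lambda>x. \<bar>X x\<bar> powr p) \<Longrightarrow> X \<in> Lp M p"
  by (simp add: Lp_def)

lemma Lp_measurable: "X \<in> Lp M p \<Longrightarrow> X \<in> borel_measurable M"
  by (simp add: Lp_def)

lemma Lp_integrable_powr: "X \<in> Lp M p \<Longrightarrow> integrable M (\<lambda>x. \<bar>X x\<bar> powr p)"
  by (simp add: Lp_def)

lemma Lp_1_iff_integrable: "X \<in> Lp M 1 \<longleftrightarrow> integrable M X"
  unfolding Lp_def by (auto simp: integrable_abs_iff)

lemma Lp_dominated:
  assumes "X \<in> Lp M p" "Y \<in> borel_measurable M" "AE x in M. \<bar>Y x\<bar> \<le> \<bar>X x\<bar>" "0 \<le> p"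
  shows "Y \<in> Lp M p"
proof (rule LpI[OF assms(2)])
  show "integrable M (\<lambda>x. \<bar>Y x\<bar> powr p)"
  proof (rule Bochner_Integration.integrable_bound[OF Lp_integrable_powr[OF assms(1)]])
    show "(\<lambda>x. \<bar>Y x\<bar> powr p) \<in> borel_measurable M" using assms(2) by measurable
    show "AE x in M. norm (\<bar>Y x\<bar> powr p) \<le> norm (\<bar>X x\<bar> powr p)"
      using assms(3) by eventually_elim (use assms(4) in \<open>auto intro: powr_mono2\<close>)
  qed
qed

lemma Lp_const: "finite_measure M \<Longrightarrow> (\<lambda>_. c) \<in> Lp M p"
  by (rule LpI) (auto intro: finite_measure.integrable_const)

lemma abs_add_powr_le:
  fixes a b :: real
  assumes "0 \<le> p"
  shows "\<bar>a + b\<bar> powr p \<le> 2 powr p * (\<bar>a\<bar> powr p + \<bar>b\<bar> powr p)"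
proof -
  have "\<bar>a + b\<bar> powr p \<le> (2 * max \<bar>a\<bar> \<bar>b\<bar>) powr p"
    using assms by (intro powr_mono2) auto
  also have "\<dots> = 2 powr p * max \<bar>a\<bar> \<bar>b\<bar> powr p" by (simp add: powr_mult)
  also have "max \<bar>a\<bar> \<bar>b\<bar> powr p \<le> \<bar>a\<bar> powr p + \<bar>b\<bar> powr p"
    by (cases "\<bar>a\<bar> \<le> \<bar>b\<bar>") (auto simp: max_def)
  finally show ?thesis by (simp add: mult_left_mono)
qed

lemma Lp_add:
  assumes "X \<in> Lp M p" "Y \<in> Lp M p" "0 \<le> p"
  shows "(\<lambda>x. X x + Y x) \<in> Lp M p"
proof (rule LpI)
  have [measurable]: "X \<in> borel_measurable M" "Y \<in> borel_measurable M"
    using assms Lp_measurable by auto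
  show "(\<lambda>x. X x + Y x) \<in> borel_measurable M" by measurable
  show "integrable M (\<lambda>x. \<bar>X x + Y x\<bar> powr p)"
  proof (rule Bochner_Integration.integrable_bound)
    show "integrable M (\<lambda>x. 2 powr p * (\<bar>X x\<bar> powr p + \<bar>Y x\<bar> powr p))"
      using Lp_integrable_powr[OF assms(1)] Lp_integrable_powr[OF assms(2)] by auto
    show "AE x in M. norm (\<bar>X x + Y x\<bar> powr p) \<le> norm (2 powr p * (\<bar>X x\<bar> powr p + \<bar>Y x\<bar> powr p))"
      using abs_add_powr_le[OF assms(3)] by auto
  qed measurable
qed

lemma Lp_cmult:
  assumes "X \<in> Lp M p"
  shows "(\<lambda>x. c * X x) \<in> Lp M p"
proof (rule LpI)
  have [measurable]: "X \<in> borel_measurable M" using assms Lp_measurable by auto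
  show "(\<lambda>x. c * X x) \<in> borel_measurable M" by measurable
  have "integrable M (\<lambda>x. \<bar>c\<bar> powr p * \<bar>X x\<bar> powr p)"
    using Lp_integrable_powr[OF assms] by auto
  thus "integrable M (\<lambda>x. \<bar>c * X x\<bar> powr p)" by (simp add: abs_mult powr_mult)
qed

lemma Lp_uminus: "X \<in> Lp M p \<Longrightarrow> (\<lambda>x. - X x) \<in> Lp M p"
  using Lp_cmult[of X M p "-1"] by simp

lemma Lp_diff: "X \<in> Lp M p \<Longrightarrow> Y \<in> Lp M p \<Longrightarrow> 0 \<le> p \<Longrightarrow> (\<lambda>x. X x - Y x) \<in> Lp M p"
  using Lp_add[OF _ Lp_uminus] by fastforce

lemma Lp_lower_exponent:
  assumes "finite_measure M" "X \<in> Lp M p'" "0 \<le> p" "p \<le> p'"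
  shows "X \<in> Lp M p"
proof (rule LpI)
  have [measurable]: "X \<in> borel_measurable M" using assms Lp_measurable by auto
  show "X \<in> borel_measurable M" by simp
  show "integrable M (\<lambda>x. \<bar>X x\<bar> powr p)"
  proof (rule Bochner_Integration.integrable_bound)
    show "integrable M (\<lambda>x. 1 + \<bar>X x\<bar> powr p')"
      using Lp_integrable_powr[OF assms(2)] finite_measure.integrable_const[OF assms(1), of 1]
      by (intro Bochner_Integration.integrable_add) auto
    have "\<bar>X x\<bar> powr p \<le> 1 + \<bar>X x\<bar> powr p'" for x
    proof (cases "\<bar>X x\<bar> \<le> 1")
      case True
      hence "\<bar>X x\<bar> powr p \<le> 1 powr p" using assms by (intro powr_mono2) auto
      thus ?thesis by (simp add: add_increasing2)
    next
      case False
      hence "\<bar>X x\<bar> powr p \<le> \<bar>X x\<bar> powr p'" using assms by (intro powr_mono) auto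
      thus ?thesis by auto
    qed
    thus "AE x in M. norm (\<bar>X x\<bar> powr p) \<le> norm (1 + \<bar>X x\<bar> powr p')" by auto
  qed measurable
qed

lemma Young_inequality_powr:
  fixes x y :: real
  assumes "0 < a" "0 < b" "0 < c" "1/a + 1/b = 1/c"
  shows "\<bar>x * y\<bar> powr c \<le> (c/a) * \<bar>x\<bar> powr a + (c/b) * \<bar>y\<bar> powr b"
proof -
  have sum1: "c/a + c/b = 1"
    using arg_cong[OF assms(4), of "\<lambda>t. c * t"] assms(3) by (simp add: distrib_left)
  have "\<bar>x\<bar> powr c * \<bar>y\<bar> powr c
      \<le> (\<bar>x\<bar> powr c) powr (a/c) / (a/c) + (\<bar>y\<bar> powr c) powr (b/c) / (b/c)"
  proof (rule Youngs_inequality)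
    have "0 < c/a" "0 < c/b" using assms by auto
    hence "c/a < 1" "c/b < 1" using sum1 by linarith+
    thus "1 < a/c" "1 < b/c" using assms(1-3) by (simp_all add: divide_less_eq_1 less_divide_eq_1)
    show "1 / (a / c) + 1 / (b / c) = 1" using sum1 by simp
  qed auto
  also have "\<dots> = (c/a) * \<bar>x\<bar> powr a + (c/b) * \<bar>y\<bar> powr b"
    using assms by (simp add: powr_powr mult.commute)
  finally show ?thesis by (simp add: abs_mult powr_mult)
qed

lemma truncation_le_sgn_mult:
  fixes y t e :: real
  assumes "0 \<le> t" "t \<le> \<bar>y\<bar>"
  shows "t powr (2 + e) \<le> sgn y * t powr (1 + e) * y"
proof -
  have "t powr (2 + e) = t * t powr (1 + e)"
    using assms(1) powr_add[of t 1 "1 + e"] by (cases "t = 0") (simp_all add: add.commute)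
  also have "\<dots> \<le> \<bar>y\<bar> * t powr (1 + e)" using assms by (intro mult_right_mono) auto
  also have "\<dots> = sgn y * t powr (1 + e) * y" by (simp add: abs_sgn mult_ac)
  finally show ?thesis .
qed

lemma Young_truncation:
  fixes a t e :: real
  assumes e: "0 < e" and t: "0 \<le> t"
  shows "\<bar>a\<bar> * t powr (1 + e) \<le> (1 / (2 + e)) * \<bar>a\<bar> powr (2 + e) + ((1 + e) / (2 + e)) * t powr (2 + e)"
proof -
  have "\<bar>a * t powr (1 + e)\<bar> powr 1
      \<le> (1 / (2 + e)) * \<bar>a\<bar> powr (2 + e) + (1 / ((2 + e) / (1 + e))) * \<bar>t powr (1 + e)\<bar> powr ((2 + e) / (1 + e))"
    using e by (intro Young_inequality_powr) (auto simp: field_simps)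
  moreover have "\<bar>t powr (1 + e)\<bar> powr ((2 + e) / (1 + e)) = t powr (2 + e)"
    using e t by (simp add: powr_powr)
  ultimately show ?thesis using t by (simp add: abs_mult)
qed

lemma sgn_truncation_Young:
  fixes a h t e y :: real
  assumes e: "0 < e" and t: "0 \<le> t" and h: "0 \<le> h"
  shows "sgn y * t powr (1 + e) * (h * a)
    \<le> (1 / (2 + e)) * (h * \<bar>a\<bar> powr (2 + e)) + ((1 + e) / (2 + e)) * (h * t powr (2 + e))"
proof -
  have "sgn y * t powr (1 + e) * (h * a) \<le> h * (\<bar>a\<bar> * t powr (1 + e))"
    using h by (auto simp: sgn_if abs_mult algebra_simps intro: order_trans[OF abs_ge_self])
  also have "\<dots> \<le> h * ((1 / (2 + e)) * \<bar>a\<bar> powr (2 + e) + ((1 + e) / (2 + e)) * t powr (2 + e))"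
    using h Young_truncation[OF e t] by (intro mult_left_mono)
  finally show ?thesis by (simp add: algebra_simps)
qed

lemma Lp_mult:
  assumes "X \<in> Lp M a" "Y \<in> Lp M b" "0 < a" "0 < b" "0 < c" "1/a + 1/b = 1/c"
  shows "(\<lambda>x. X x * Y x) \<in> Lp M c"
proof (rule LpI)
  have [measurable]: "X \<in> borel_measurable M" "Y \<in> borel_measurable M"
    using assms Lp_measurable by auto
  show "(\<lambda>x. X x * Y x) \<in> borel_measurable M" by measurable
  show "integrable M (\<lambda>x. \<bar>X x * Y x\<bar> powr c)"
  proof (rule Bochner_Integration.integrable_bound)
    show "integrable M (\<lambda>x. (c/a) * \<bar>X x\<bar> powr a + (c/b) * \<bar>Y x\<bar> powr b)"
      using Lp_integrable_powr[OF assms(1)] Lp_integrable_powr[OF assms(2)] by auto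
    show "AE x in M. norm (\<bar>X x * Y x\<bar> powr c)
        \<le> norm ((c/a) * \<bar>X x\<bar> powr a + (c/b) * \<bar>Y x\<bar> powr b)"
      using Young_inequality_powr[OF assms(3-6)] assms(3-5) by auto
  qed measurable
qed

lemma Lp_abs_powr:
  assumes "X \<in> Lp M a" "0 < k"
  shows "(\<lambda>x. \<bar>X x\<bar> powr k) \<in> Lp M (a/k)"
proof (rule LpI)
  have [measurable]: "X \<in> borel_measurable M" using assms Lp_measurable by auto
  show "(\<lambda>x. \<bar>X x\<bar> powr k) \<in> borel_measurable M" by measurable
  show "integrable M (\<lambda>x. \<bar>\<bar>X x\<bar> powr k\<bar> powr (a / k))"
    using Lp_integrable_powr[OF assms(1)] assms by (simp add: powr_powr)
qed

lemma Lp_power2: "X \<in> Lp M a \<Longrightarrow> (\<lambda>x. (X x)\<^sup>2) \<in> Lp M (a/2)"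
  using Lp_abs_powr[of X M a 2] by simp

lemma Lp_indicator:
  "finite_measure M \<Longrightarrow> A \<in> sets M \<Longrightarrow> 0 \<le> p \<Longrightarrow> (indicator A :: 'a \<Rightarrow> real) \<in> Lp M p"
  by (rule Lp_dominated[OF Lp_const[of M 1]]) (auto simp: indicator_def)

lemma integrable_incseq_bounded:
  fixes g :: "nat \<Rightarrow> 'a \<Rightarrow> real"
  assumes g: "\<And>n. integrable M (g n)" and inc: "\<And>x. x \<in> space M \<Longrightarrow> incseq (\<lambda>n. g n x)"
    and lim: "\<And>x. x \<in> space M \<Longrightarrow> (\<lambda>n. g n x) \<longlonglongrightarrow> u x"
    and u: "u \<in> borel_measurable M" and bound: "\<And>n. integral\<^sup>L M (g n) \<le> A"
  shows "integrable M u" "integral\<^sup>L M u \<le> A"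
proof -
  have "incseq (\<lambda>n. integral\<^sup>L M (g n))"
    using inc g by (auto simp: incseq_def intro!: integral_mono)
  hence L: "(\<lambda>n. integral\<^sup>L M (g n)) \<longlonglongrightarrow> (SUP n. integral\<^sup>L M (g n))"
    using bound by (intro LIMSEQ_incseq_SUP bdd_aboveI[where M = A]) auto
  have mono: "AE x in M. mono (\<lambda>n. g n x)" using inc by (auto simp: incseq_def mono_def)
  have lim': "AE x in M. (\<lambda>n. g n x) \<longlonglongrightarrow> u x" using lim by auto
  show "integrable M u" by (rule integrable_monotone_convergence[OF g mono lim' L u])
  have "integral\<^sup>L M u = (SUP n. integral\<^sup>L M (g n))"
    by (rule integral_monotone_convergence[OF g mono lim' L u])
  also have "\<dots> \<le> A" using bound by (intro cSUP_least) auto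
  finally show "integral\<^sup>L M u \<le> A" .
qed

lemma integrable_bounded_mult:
  fixes f g :: "'a \<Rightarrow> real"
  assumes "integrable M f" "g \<in> borel_measurable M" "\<And>x. \<bar>g x\<bar> \<le> B"
  shows "integrable M (\<lambda>x. g x * f x)"
proof (rule Bochner_Integration.integrable_bound[OF integrable_mult_right[OF assms(1), of B]])
  show "AE x in M. norm (g x * f x) \<le> norm (B * f x)"
  proof (intro AE_I2)
    fix x
    have "\<bar>g x\<bar> * \<bar>f x\<bar> \<le> \<bar>B\<bar> * \<bar>f x\<bar>"
      using assms(3)[of x] by (intro mult_right_mono) auto
    thus "norm (g x * f x) \<le> norm (B * f x)" by (simp add: abs_mult)
  qed
qed (use assms in measurable)

lemma Lp_incseq_gap_tendsto_zero:
  fixes U :: "nat \<Rightarrow> 'a \<Rightarrow> real"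
  assumes r: "0 < r" and u: "u \<in> Lp M r" and U: "\<And>i. U i \<in> borel_measurable M"
    and nonneg: "\<And>i x. 0 \<le> U i x" and bounds: "\<And>i x. x \<in> space M \<Longrightarrow> U i x \<le> u x"
    and lim: "\<And>x. x \<in> space M \<Longrightarrow> (\<lambda>i. U i x) \<longlonglongrightarrow> u x"
  shows "(\<lambda>k. integral\<^sup>L M (\<lambda>x. \<bar>max 0 (u x - U k x)\<bar> powr r)) \<longlonglongrightarrow> 0"
proof -
  have [measurable]: "u \<in> borel_measurable M" "U i \<in> borel_measurable M" for i
    using u U by (auto intro: Lp_measurable)
  have "(\<lambda>k. integral\<^sup>L M (\<lambda>x. \<bar>max 0 (u x - U k x)\<bar> powr r)) \<longlonglongrightarrow> integral\<^sup>L M (\<lambda>x. 0)"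
  proof (rule integral_dominated_convergence[where w = "\<lambda>x. \<bar>u x\<bar> powr r"])
    show "AE x in M. (\<lambda>k. \<bar>max 0 (u x - U k x)\<bar> powr r) \<longlonglongrightarrow> 0"
    proof (rule AE_I2)
      fix x assume "x \<in> space M"
      hence "(\<lambda>k. max 0 (u x - U k x)) \<longlonglongrightarrow> max 0 (u x - u x)" by (intro tendsto_intros lim)
      thus "(\<lambda>k. \<bar>max 0 (u x - U k x)\<bar> powr r) \<longlonglongrightarrow> 0"
        using r by (intro tendsto_zero_powrI[where b = r] tendsto_rabs_zero) auto
    qed
    show "AE x in M. norm (\<bar>max 0 (u x - U k x)\<bar> powr r) \<le> \<bar>u x\<bar> powr r" for k
    proof (rule AE_I2)
      fix x assume "x \<in> space M"
      hence "\<bar>max 0 (u x - U k x)\<bar> \<le> \<bar>u x\<bar>" using bounds[of x k] nonneg[of k x] by auto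
      thus "norm (\<bar>max 0 (u x - U k x)\<bar> powr r) \<le> \<bar>u x\<bar> powr r" using r by (simp add: powr_mono2)
    qed
  qed (use Lp_integrable_powr[OF u] in auto)
  thus ?thesis by simp
qed

lemma AE_tendsto_zero_if_integrals_geometric:
  fixes a :: "nat \<Rightarrow> 'a \<Rightarrow> real"
  assumes meas: "\<And>k. a k \<in> borel_measurable M" and int: "\<And>k. integrable M (a k)"
    and nonneg: "\<And>k. AE x in M. 0 \<le> a k x"
    and bound: "\<And>k. integral\<^sup>L M (a k) \<le> c * (1/2)^k"
  shows "AE x in M. (\<lambda>k. a k x) \<longlonglongrightarrow> 0"
proof -
  have "0 \<le> c" using integral_nonneg_AE[OF nonneg[of 0]] bound[of 0] by simp
  have "(\<integral>\<^sup>+ x. (\<Sum>k. ennreal (a k x)) \<partial>M) = (\<Sum>k. \<integral>\<^sup>+ x. ennreal (a k x) \<partial>M)"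
    by (rule nn_integral_suminf) (use meas in auto)
  also have "\<dots> = (\<Sum>k. ennreal (integral\<^sup>L M (a k)))"
    using nn_integral_eq_integral[OF int nonneg] by simp
  also have "\<dots> \<le> (\<Sum>k. ennreal (c * (1/2)^k))"
    using bound by (intro suminf_le summableI) (auto intro: ennreal_leI)
  also have "\<dots> < \<top>"
    using \<open>0 \<le> c\<close> by (subst suminf_ennreal2) (auto intro: summable_mult summable_geometric)
  finally have "AE x in M. (\<Sum>k. ennreal (a k x)) \<noteq> \<infinity>"
    by (intro nn_integral_noteq_infinite) (use meas in auto)
  moreover have "AE x in M. \<forall>k. 0 \<le> a k x" using nonneg by (simp add: AE_all_countable)
  ultimately show ?thesis
  proof eventually_elim
    case (elim x)
    hence "summable (\<lambda>k. a k x)" by (intro summable_suminf_not_top) auto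
    thus ?case by (rule summable_LIMSEQ_zero)
  qed
qed

text \<open>The majorant is \<open>(\<Sum>\<^sub>k V\<^sub>k\<^sup>r)\<^sup>1\<^sup>/\<^sup>r\<close>.\<close>

lemma Lp_common_majorant:
  fixes V :: "nat \<Rightarrow> 'a \<Rightarrow> real"
  assumes r: "0 < r" and V: "\<And>k. V k \<in> Lp M r" and nonneg: "\<And>k x. 0 \<le> V k x"
    and small: "\<And>k. integral\<^sup>L M (\<lambda>x. \<bar>V k x\<bar> powr r) \<le> (1/2)^k"
  shows "\<exists>Z \<in> Lp M r. \<forall>k. AE x in M. V k x \<le> Z x"
proof -
  have [measurable]: "V k \<in> borel_measurable M" for k using V Lp_measurable by blast
  define S where "S = (\<lambda>x. \<Sum>k. ennreal (V k x powr r))"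
  have [measurable]: "S \<in> borel_measurable M" unfolding S_def by measurable
  have "integral\<^sup>N M S = (\<Sum>k. \<integral>\<^sup>+ x. ennreal (V k x powr r) \<partial>M)"
    unfolding S_def by (rule nn_integral_suminf) measurable
  also have "\<dots> \<le> (\<Sum>k. ennreal ((1/2)^k))"
  proof (intro suminf_le summableI)
    fix k
    have "(\<integral>\<^sup>+ x. ennreal (V k x powr r) \<partial>M) = ennreal (integral\<^sup>L M (\<lambda>x. \<bar>V k x\<bar> powr r))"
      using Lp_integrable_powr[OF V] nonneg by (subst nn_integral_eq_integral) auto
    thus "(\<integral>\<^sup>+ x. ennreal (V k x powr r) \<partial>M) \<le> ennreal ((1/2)^k)"
      using small[of k] by (simp add: ennreal_leI)
  qed
  also have "\<dots> < \<top>" by (subst suminf_ennreal2) (auto intro: summable_geometric)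
  finally have S_finite: "integral\<^sup>N M S < \<top>" .
  define Z where "Z = (\<lambda>x. enn2real (S x) powr (1/r))"
  have "integrable M (\<lambda>x. enn2real (S x))"
  proof (rule integrableI_bounded)
    have "(\<integral>\<^sup>+ x. ennreal (norm (enn2real (S x))) \<partial>M) \<le> integral\<^sup>N M S"
      by (intro nn_integral_mono) (simp add: ennreal_enn2real_if)
    thus "(\<integral>\<^sup>+ x. ennreal (norm (enn2real (S x))) \<partial>M) < \<infinity>" using S_finite by simp
  qed measurable
  moreover have "\<bar>Z x\<bar> powr r = enn2real (S x)" for x
    unfolding Z_def using r by (simp add: powr_powr)
  ultimately have "Z \<in> Lp M r" by (intro LpI) (auto simp: Z_def)
  moreover have "AE x in M. S x \<noteq> \<infinity>"
    by (rule nn_integral_noteq_infinite) (use S_finite in auto)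
  hence "AE x in M. V k x \<le> Z x" for k
  proof eventually_elim
    case (elim x)
    have "(\<Sum>i\<in>{k}. ennreal (V i x powr r)) \<le> S x"
      unfolding S_def by (rule sum_le_suminf) auto
    hence "V k x powr r \<le> enn2real (S x)"
      using elim by (cases "S x" rule: ennreal_cases) auto
    hence "(V k x powr r) powr (1/r) \<le> Z x"
      unfolding Z_def using r by (intro powr_mono2) auto
    thus ?case using r nonneg[of k x] by (simp add: powr_powr)
  qed
  ultimately show ?thesis by blast
qed

lemma (in prob_space) indep_set_vimage_integral_mult:
  fixes \<xi> :: "'a \<Rightarrow> real" and g :: "real \<Rightarrow> real" and Y :: "'a \<Rightarrow> real"
  assumes ind: "indep_set {\<xi> -` A \<inter> space M | A. A \<in> sets borel} (sets C)"
    and subalg: "subalgebra M C"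
    and \<xi>[measurable]: "\<xi> \<in> borel_measurable M" and g[measurable]: "g \<in> borel_measurable borel"
    and Y[measurable]: "Y \<in> borel_measurable C"
    and int_g: "integrable M (\<lambda>x. g (\<xi> x))" and int_Y: "integrable M Y"
  shows "(\<integral>x. g (\<xi> x) * Y x \<partial>M) = (\<integral>x. g (\<xi> x) \<partial>M) * (\<integral>x. Y x \<partial>M)"
proof -
  have [measurable]: "Y \<in> borel_measurable M" using measurable_from_subalg[OF subalg Y] .
  have space_C: "space C = space M" using subalg by (simp add: subalgebra_def)
  define \<xi>sets where "\<xi>sets = {\<xi> -` A \<inter> space M | A. A \<in> sets borel}"
  have \<xi>sets_eq: "\<xi>sets = sets (vimage_algebra (space M) \<xi> borel)"
    unfolding \<xi>sets_def by (subst sets_vimage_algebra2) auto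
  have "{(\<lambda>x. g (\<xi> x)) -` A \<inter> space M | A. A \<in> sets borel} \<subseteq> \<xi>sets"
  proof
    fix S assume "S \<in> {(\<lambda>x. g (\<xi> x)) -` A \<inter> space M | A. A \<in> sets borel}"
    then obtain A where "A \<in> sets borel" "S = \<xi> -` (g -` A) \<inter> space M" by auto
    moreover have "g -` A \<in> sets borel" using measurable_sets[OF g \<open>A \<in> sets borel\<close>] by simp
    ultimately show "S \<in> \<xi>sets" unfolding \<xi>sets_def by blast
  qed
  from sets.sigma_sets_subset[OF this[unfolded \<xi>sets_eq]]
  have sub1: "sigma_sets (space M) {(\<lambda>x. g (\<xi> x)) -` A \<inter> space M | A. A \<in> sets borel} \<subseteq> \<xi>sets"
    unfolding \<xi>sets_eq by (simp add: space_vimage_algebra)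
  have "{Y -` A \<inter> space M | A. A \<in> sets borel} \<subseteq> sets C"
    using measurable_sets[OF Y] space_C by auto
  hence sub2: "sigma_sets (space M) {Y -` A \<inter> space M | A. A \<in> sets borel} \<subseteq> sets C"
    using sets.sigma_sets_subset[of _ C] space_C by simp
  have "\<xi>sets \<subseteq> events \<and> sets C \<subseteq> events \<and> (\<forall>a\<in>\<xi>sets. \<forall>b\<in>sets C. prob (a \<inter> b) = prob a * prob b)"
    using ind unfolding \<xi>sets_def[symmetric] indep_sets2_eq .
  hence "indep_set (sigma_sets (space M) {(\<lambda>x. g (\<xi> x)) -` A \<inter> space M | A. A \<in> sets borel})
      (sigma_sets (space M) {Y -` A \<inter> space M | A. A \<in> sets borel})"
    using sub1 sub2 unfolding indep_sets2_eq by blast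
  hence "indep_var borel (\<lambda>x. g (\<xi> x)) borel Y" by (simp add: indep_var_eq)
  from indep_var_lebesgue_integral[OF this int_g int_Y] show ?thesis .
qed

section \<open>Hahn--Banach on a space of real functions\<close>

locale sublinear_on =
  fixes V :: "('a \<Rightarrow> real) set" and \<rho> :: "('a \<Rightarrow> real) \<Rightarrow> real"
  assumes add_mem: "X \<in> V \<Longrightarrow> Y \<in> V \<Longrightarrow> (\<lambda>x. X x + Y x) \<in> V"
    and cmult_mem: "X \<in> V \<Longrightarrow> (\<lambda>x. c * X x) \<in> V"
    and zero_mem: "(\<lambda>x. 0) \<in> V"
    and subadditive: "X \<in> V \<Longrightarrow> Y \<in> V \<Longrightarrow> \<rho> (\<lambda>x. X x + Y x) \<le> \<rho> X + \<rho> Y"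
    and pos_homogeneous: "X \<in> V \<Longrightarrow> 0 \<le> l \<Longrightarrow> \<rho> (\<lambda>x. l * X x) = l * \<rho> X"
begin

lemma uminus_mem: "X \<in> V \<Longrightarrow> (\<lambda>x. - X x) \<in> V"
  using cmult_mem[of X "-1"] by simp

definition sublinear :: "(('a \<Rightarrow> real) \<Rightarrow> real) \<Rightarrow> bool" where
  "sublinear p \<longleftrightarrow> (\<forall>X\<in>V. \<forall>Y\<in>V. p (\<lambda>x. X x + Y x) \<le> p X + p Y)
     \<and> (\<forall>X\<in>V. \<forall>l\<ge>0. p (\<lambda>x. l * X x) = l * p X)"

lemma sublinearD:
  assumes "sublinear p"
  shows "X \<in> V \<Longrightarrow> Y \<in> V \<Longrightarrow> p (\<lambda>x. X x + Y x) \<le> p X + p Y"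
    and "X \<in> V \<Longrightarrow> 0 \<le> l \<Longrightarrow> p (\<lambda>x. l * X x) = l * p X"
  using assms by (auto simp: sublinear_def)

lemma sublinear_zero: "sublinear p \<Longrightarrow> p (\<lambda>x. 0) = 0"
  using sublinearD(2)[OF _ zero_mem, of p 0] by simp

lemma sublinear_uminus_le:
  assumes p: "sublinear p" and X: "X \<in> V"
  shows "- p (\<lambda>x. - X x) \<le> p X"
  using sublinearD(1)[OF p X uminus_mem[OF X]] sublinear_zero[OF p] by simp

text \<open>Normalising to \<open>0\<close> off \<open>V\<close> makes the order antisymmetric; Zorn's lemma then yields a
  pointwise minimal element, which turns out to be linear.\<close>

definition dominated :: "(('a \<Rightarrow> real) \<Rightarrow> real) set" where
  "dominated = {p. sublinear p \<and> (\<forall>X\<in>V. p X \<le> \<rho> X) \<and> (\<forall>X. X \<notin> V \<longrightarrow> p X = 0)}"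

definition above :: "((('a \<Rightarrow> real) \<Rightarrow> real) \<times> (('a \<Rightarrow> real) \<Rightarrow> real)) set" where
  "above = {(p, q). p \<in> dominated \<and> q \<in> dominated \<and> (\<forall>X\<in>V. q X \<le> p X)}"

lemma dominatedD:
  assumes "p \<in> dominated"
  shows "sublinear p" "X \<in> V \<Longrightarrow> p X \<le> \<rho> X" "X \<notin> V \<Longrightarrow> p X = 0"
  using assms by (auto simp: dominated_def)

lemma dominated_lower_bound: "p \<in> dominated \<Longrightarrow> X \<in> V \<Longrightarrow> - \<rho> (\<lambda>x. - X x) \<le> p X"
  using sublinear_uminus_le dominatedD uminus_mem by force

lemma Field_above: "Field above = dominated"
  unfolding Field_def above_def by auto

lemma partial_order_above: "Partial_order above"
  unfolding partial_order_on_def preorder_on_def refl_on_def trans_def antisym_def Field_above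
proof (intro conjI allI impI ballI)
  show "above \<subseteq> dominated \<times> dominated" unfolding above_def by auto
  show "(p, p) \<in> above" if "p \<in> dominated" for p using that unfolding above_def by auto
  show "(p, r) \<in> above" if "(p, q) \<in> above" "(q, r) \<in> above" for p q r
    using that unfolding above_def by (auto intro: order_trans)
  show "p = q" if pq: "(p, q) \<in> above" "(q, p) \<in> above" for p q
  proof
    fix X show "p X = q X"
      using pq by (cases "X \<in> V") (auto simp: above_def dominated_def intro: antisym)
  qed
qed

lemma sublinear_cong: "sublinear p \<Longrightarrow> (\<And>X. X \<in> V \<Longrightarrow> q X = p X) \<Longrightarrow> sublinear q"
  unfolding sublinear_def by (simp add: add_mem cmult_mem)

lemma restrict_in_dominated: "(\<lambda>X. if X \<in> V then \<rho> X else 0) \<in> dominated"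
proof -
  have "sublinear \<rho>" by (simp add: sublinear_def subadditive pos_homogeneous)
  thus ?thesis unfolding dominated_def by (auto intro: sublinear_cong)
qed

definition chain_inf :: "(('a \<Rightarrow> real) \<Rightarrow> real) set \<Rightarrow> ('a \<Rightarrow> real) \<Rightarrow> real" where
  "chain_inf Ch X = (if X \<in> V then (INF p\<in>Ch. p X) else 0)"

context
  fixes Ch assumes Ch: "Ch \<in> Chains above" and nonempty: "Ch \<noteq> {}"
begin

lemma chain_dominated: "Ch \<subseteq> dominated"
  using Ch unfolding Chains_def above_def by auto

lemma chain_comparable:
  "a \<in> Ch \<Longrightarrow> b \<in> Ch \<Longrightarrow> (\<forall>X\<in>V. a X \<le> b X) \<or> (\<forall>X\<in>V. b X \<le> a X)"
  using Ch unfolding Chains_def above_def by blast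

lemma chain_inf_le: "a \<in> Ch \<Longrightarrow> X \<in> V \<Longrightarrow> chain_inf Ch X \<le> a X"
  unfolding chain_inf_def using chain_dominated dominated_lower_bound
  by (auto intro!: cINF_lower bdd_belowI[where m = "- \<rho> (\<lambda>x. - X x)"])

lemma chain_inf_greatest: "X \<in> V \<Longrightarrow> (\<And>a. a \<in> Ch \<Longrightarrow> c \<le> a X) \<Longrightarrow> c \<le> chain_inf Ch X"
  unfolding chain_inf_def using nonempty by (auto intro: cINF_greatest)

lemma chain_inf_subadditive:
  assumes X: "X \<in> V" and Y: "Y \<in> V"
  shows "chain_inf Ch (\<lambda>x. X x + Y x) \<le> chain_inf Ch X + chain_inf Ch Y"
proof -
  have "chain_inf Ch (\<lambda>x. X x + Y x) \<le> a X + b Y" if a: "a \<in> Ch" and b: "b \<in> Ch" for a b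
  proof -
    obtain c where c: "c \<in> Ch" "c X \<le> a X" "c Y \<le> b Y"
      using chain_comparable[OF a b] a b X Y by auto
    have "chain_inf Ch (\<lambda>x. X x + Y x) \<le> c (\<lambda>x. X x + Y x)"
      by (rule chain_inf_le[OF c(1) add_mem[OF X Y]])
    also have "\<dots> \<le> c X + c Y"
      using chain_dominated c(1) X Y by (intro sublinearD(1)) (auto dest: dominatedD)
    finally show ?thesis using c by simp
  qed
  hence "chain_inf Ch (\<lambda>x. X x + Y x) - b Y \<le> chain_inf Ch X" if "b \<in> Ch" for b
    using that by (intro chain_inf_greatest[OF X]) (simp add: algebra_simps)
  hence "chain_inf Ch (\<lambda>x. X x + Y x) - chain_inf Ch X \<le> chain_inf Ch Y"
    by (intro chain_inf_greatest[OF Y]) (simp add: algebra_simps)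
  thus ?thesis by simp
qed

lemma chain_inf_homogeneous:
  assumes X: "X \<in> V" and l: "0 < l"
  shows "chain_inf Ch (\<lambda>x. l * X x) = l * chain_inf Ch X"
proof -
  have hom: "a (\<lambda>x. l * X x) = l * a X" if "a \<in> Ch" for a
    using chain_dominated that X l by (intro sublinearD(2)) (auto dest: dominatedD)
  have "(1/l) * chain_inf Ch (\<lambda>x. l * X x) \<le> chain_inf Ch X"
  proof (rule chain_inf_greatest[OF X])
    fix a assume a: "a \<in> Ch"
    have "chain_inf Ch (\<lambda>x. l * X x) \<le> l * a X"
      using chain_inf_le[OF a cmult_mem[OF X, of l]] hom[OF a] by simp
    thus "(1/l) * chain_inf Ch (\<lambda>x. l * X x) \<le> a X" using l by (simp add: field_simps)
  qed
  moreover have "l * chain_inf Ch X \<le> chain_inf Ch (\<lambda>x. l * X x)"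
    using l by (intro chain_inf_greatest[OF cmult_mem[OF X]]) (auto simp: hom chain_inf_le[OF _ X])
  ultimately show ?thesis using l by (simp add: field_simps)
qed

lemma chain_inf_zero: "chain_inf Ch (\<lambda>x. 0) = 0"
proof (rule antisym)
  obtain a where a: "a \<in> Ch" using nonempty by auto
  hence "sublinear a" using chain_dominated by (auto dest: dominatedD)
  thus "chain_inf Ch (\<lambda>x. 0) \<le> 0"
    using chain_inf_le[OF a zero_mem] by (simp add: sublinear_zero)
  show "0 \<le> chain_inf Ch (\<lambda>x. 0)"
    using chain_dominated by (intro chain_inf_greatest[OF zero_mem]) (auto dest!: dominatedD sublinear_zero)
qed

lemma chain_inf_lower_bound: "chain_inf Ch \<in> dominated" "a \<in> Ch \<Longrightarrow> (a, chain_inf Ch) \<in> above"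
proof -
  have "sublinear (chain_inf Ch)"
    unfolding sublinear_def
  proof (intro conjI ballI allI impI)
    show "chain_inf Ch (\<lambda>x. l * X x) = l * chain_inf Ch X" if "X \<in> V" "0 \<le> l" for X l
      using that chain_inf_homogeneous chain_inf_zero by (cases "l = 0") auto
  qed (rule chain_inf_subadditive)
  moreover have "chain_inf Ch X \<le> \<rho> X" if "X \<in> V" for X
    using chain_inf_le[OF _ that] chain_dominated that nonempty by (force dest: dominatedD)
  ultimately show inf: "chain_inf Ch \<in> dominated"
    by (auto simp: dominated_def chain_inf_def)
  show "a \<in> Ch \<Longrightarrow> (a, chain_inf Ch) \<in> above"
    using inf chain_dominated chain_inf_le by (auto simp: above_def)
qed

end

lemma minimal_dominated_exists: "\<exists>m\<in>dominated. \<forall>a\<in>dominated. (m, a) \<in> above \<longrightarrow> a = m"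
proof -
  have "\<exists>m\<in>Field above. \<forall>a\<in>Field above. (m, a) \<in> above \<longrightarrow> a = m"
  proof (rule Zorns_po_lemma[OF partial_order_above])
    fix Ch assume Ch: "Ch \<in> Chains above"
    show "\<exists>u\<in>Field above. \<forall>a\<in>Ch. (a, u) \<in> above"
      using restrict_in_dominated chain_inf_lower_bound[OF Ch]
      by (cases "Ch = {}") (auto simp: Field_above)
  qed
  thus ?thesis by (simp add: Field_above)
qed

text \<open>Tilting \<open>m\<close> in the direction \<open>y\<close> gives a sublinear functional below \<open>m\<close> whose value at
  \<open>- y\<close> is at most \<open>- m y\<close>; so a minimal \<open>m\<close> is odd.\<close>

definition tilt :: "(('a \<Rightarrow> real) \<Rightarrow> real) \<Rightarrow> ('a \<Rightarrow> real) \<Rightarrow> ('a \<Rightarrow> real) \<Rightarrow> real" where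
  "tilt m y X = (if X \<in> V then (INF t\<in>{0..}. m (\<lambda>x. X x + t * y x) - t * m y) else 0)"

context
  fixes m y assumes m: "sublinear m" and y: "y \<in> V"
begin

lemma tilt_le: assumes X: "X \<in> V" "0 \<le> t" shows "tilt m y X \<le> m (\<lambda>x. X x + t * y x) - t * m y"
proof -
  have "- m (\<lambda>x. - X x) \<le> m (\<lambda>x. X x + s * y x) - s * m y" if "0 \<le> s" for s
    using sublinearD(1)[OF m add_mem[OF X(1) cmult_mem[OF y]] uminus_mem[OF X(1)], of s]
      sublinearD(2)[OF m y that] by simp
  thus ?thesis unfolding tilt_def using X
    by (auto intro!: cINF_lower bdd_belowI[where m = "- m (\<lambda>x. - X x)"])
qed

lemma tilt_greatest:
  "X \<in> V \<Longrightarrow> (\<And>t. 0 \<le> t \<Longrightarrow> c \<le> m (\<lambda>x. X x + t * y x) - t * m y) \<Longrightarrow> c \<le> tilt m y X"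
  unfolding tilt_def by (auto intro!: cINF_greatest)

lemma tilt_subadditive:
  assumes X: "X \<in> V" and Z: "Z \<in> V"
  shows "tilt m y (\<lambda>x. X x + Z x) \<le> tilt m y X + tilt m y Z"
proof -
  have "tilt m y (\<lambda>x. X x + Z x)
      \<le> (m (\<lambda>x. X x + s * y x) - s * m y) + (m (\<lambda>x. Z x + t * y x) - t * m y)"
    if "0 \<le> s" "0 \<le> t" for s t
  proof -
    have "tilt m y (\<lambda>x. X x + Z x)
        \<le> m (\<lambda>x. (X x + s * y x) + (Z x + t * y x)) - (s + t) * m y"
      using tilt_le[OF add_mem[OF X Z], of "s + t"] that by (simp add: algebra_simps)
    also have "\<dots> \<le> m (\<lambda>x. X x + s * y x) + m (\<lambda>x. Z x + t * y x) - (s + t) * m y"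
      using sublinearD(1)[OF m] X Z y by (simp add: add_mem cmult_mem)
    finally show ?thesis by (simp add: algebra_simps)
  qed
  hence "tilt m y (\<lambda>x. X x + Z x) - (m (\<lambda>x. Z x + t * y x) - t * m y) \<le> tilt m y X"
    if "0 \<le> t" for t
    using that by (intro tilt_greatest[OF X]) (simp add: algebra_simps)
  hence "tilt m y (\<lambda>x. X x + Z x) - tilt m y X \<le> tilt m y Z"
    by (intro tilt_greatest[OF Z]) (simp add: algebra_simps)
  thus ?thesis by simp
qed

lemma tilt_scaled:
  assumes X: "X \<in> V" and l: "0 < l" and t: "0 \<le> t"
  shows "m (\<lambda>x. l * X x + t * y x) - t * m y = l * (m (\<lambda>x. X x + (t / l) * y x) - (t / l) * m y)"
proof -
  have "(\<lambda>x. l * X x + t * y x) = (\<lambda>x. l * (X x + (t / l) * y x))"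
    using l by (auto simp: algebra_simps)
  thus ?thesis
    using sublinearD(2)[OF m add_mem[OF X cmult_mem[OF y]], of l "t / l"] l
    by (simp add: algebra_simps)
qed

lemma tilt_homogeneous:
  assumes X: "X \<in> V" and l: "0 < l"
  shows "tilt m y (\<lambda>x. l * X x) = l * tilt m y X"
proof (rule antisym)
  have "(1/l) * tilt m y (\<lambda>x. l * X x) \<le> tilt m y X"
  proof (rule tilt_greatest[OF X])
    fix s :: real assume s: "0 \<le> s"
    have "tilt m y (\<lambda>x. l * X x) \<le> l * (m (\<lambda>x. X x + s * y x) - s * m y)"
      using tilt_le[OF cmult_mem[OF X, of l], of "l * s"] tilt_scaled[OF X l, of "l * s"] s l by simp
    thus "(1/l) * tilt m y (\<lambda>x. l * X x) \<le> m (\<lambda>x. X x + s * y x) - s * m y"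
      using l by (simp add: field_simps)
  qed
  thus "tilt m y (\<lambda>x. l * X x) \<le> l * tilt m y X" using l by (simp add: field_simps)
  show "l * tilt m y X \<le> tilt m y (\<lambda>x. l * X x)"
  proof (rule tilt_greatest[OF cmult_mem[OF X]])
    fix t :: real assume t: "0 \<le> t"
    show "l * tilt m y X \<le> m (\<lambda>x. l * X x + t * y x) - t * m y"
      using tilt_le[OF X, of "t / l"] tilt_scaled[OF X l t] t l by simp
  qed
qed

lemma tilt_zero: "tilt m y (\<lambda>x. 0) = 0"
proof -
  have "m (\<lambda>x. 0 + t * y x) - t * m y = 0" if "0 \<le> t" for t
    using sublinearD(2)[OF m y that] by simp
  thus ?thesis using tilt_le[OF zero_mem, of 0] sublinear_zero[OF m]
    by (intro antisym tilt_greatest[OF zero_mem]) auto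
qed

lemma sublinear_tilt: "sublinear (tilt m y)"
  unfolding sublinear_def
proof (intro conjI ballI allI impI)
  show "tilt m y (\<lambda>x. l * X x) = l * tilt m y X" if "X \<in> V" "0 \<le> l" for X l
    using that tilt_homogeneous tilt_zero by (cases "l = 0") auto
qed (rule tilt_subadditive)

end

lemma minimal_dominated_odd:
  assumes mD: "m \<in> dominated" and minimal: "\<forall>a\<in>dominated. (m, a) \<in> above \<longrightarrow> a = m"
    and y: "y \<in> V"
  shows "m (\<lambda>x. - y x) = - m y"
proof -
  have m: "sublinear m" using mD by (rule dominatedD)
  have below: "tilt m y X \<le> m X" if "X \<in> V" for X
    using tilt_le[OF m y that, of 0] by simp
  have "tilt m y \<in> dominated"
    using sublinear_tilt[OF m y] below dominatedD(2)[OF mD]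
    by (fastforce simp: dominated_def tilt_def)
  hence "tilt m y = m" using minimal mD below by (auto simp: above_def)
  hence "m (\<lambda>x. - y x) \<le> - m y"
    using tilt_le[OF m y uminus_mem[OF y], of 1] sublinear_zero[OF m] by simp
  thus ?thesis using sublinear_uminus_le[OF m y] by simp
qed

theorem Hahn_Banach_dominated_linear:
  "\<exists>L. (\<forall>X\<in>V. \<forall>Y\<in>V. L (\<lambda>x. X x + Y x) = L X + L Y) \<and> (\<forall>X\<in>V. \<forall>c. L (\<lambda>x. c * X x) = c * L X)
     \<and> (\<forall>X\<in>V. L X \<le> \<rho> X)"
proof -
  obtain m where mD: "m \<in> dominated" and minimal: "\<forall>a\<in>dominated. (m, a) \<in> above \<longrightarrow> a = m"
    using minimal_dominated_exists by blast
  have m: "sublinear m" using mD by (rule dominatedD)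
  note odd = minimal_dominated_odd[OF mD minimal]
  show ?thesis
  proof (intro exI[of _ m] conjI ballI allI)
    fix X Y assume X: "X \<in> V" and Y: "Y \<in> V"
    have "- m (\<lambda>x. X x + Y x) \<le> - m X - m Y"
      using sublinearD(1)[OF m uminus_mem[OF X] uminus_mem[OF Y]] odd[OF add_mem[OF X Y]]
        odd[OF X] odd[OF Y] by simp
    thus "m (\<lambda>x. X x + Y x) = m X + m Y" using sublinearD(1)[OF m X Y] by simp
  next
    fix X c assume X: "X \<in> V"
    show "m (\<lambda>x. c * X x) = c * m X"
    proof (cases "0 \<le> c")
      case False
      have "m (\<lambda>x. (- c) * (- X x)) = (- c) * m (\<lambda>x. - X x)"
        using False by (intro sublinearD(2)[OF m uminus_mem[OF X]]) simp
      thus ?thesis using odd[OF X] by simp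
    qed (rule sublinearD(2)[OF m X])
  next
    fix X assume "X \<in> V" thus "m X \<le> \<rho> X" using dominatedD(2)[OF mD] by blast
  qed
qed

end

section \<open>Sublinear expectations and their densities\<close>

locale sublinear_expectation =
  fixes M :: "'a measure" and eps :: real and \<rho> :: "('a \<Rightarrow> real) \<Rightarrow> real"
  assumes prob: "prob_space M" and eps_pos: "0 < eps"
    and sublinear: "sublinear_op M eps \<rho>"
begin

sublocale prob_space M by (rule prob)

abbreviation D :: "('a \<Rightarrow> real) set" where "D \<equiv> dens M eps \<rho>"

abbreviation E :: "('a \<Rightarrow> real) \<Rightarrow> ('a \<Rightarrow> real) \<Rightarrow> real" where
  "E f X \<equiv> integral\<^sup>L M (\<lambda>x. f x * X x)"

lemma Lp_const': "(\<lambda>_. c) \<in> Lp M p"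
  by (rule Lp_const) unfold_locales

lemma Lp_add': "X \<in> Lp M (2 + eps) \<Longrightarrow> Y \<in> Lp M (2 + eps) \<Longrightarrow> (\<lambda>x. X x + Y x) \<in> Lp M (2 + eps)"
  by (rule Lp_add) (use eps_pos in auto)

lemma Lp_diff': "X \<in> Lp M (2 + eps) \<Longrightarrow> Y \<in> Lp M (2 + eps) \<Longrightarrow> (\<lambda>x. X x - Y x) \<in> Lp M (2 + eps)"
  by (rule Lp_diff) (use eps_pos in auto)

lemma Lp_power2_diff:
  "\<xi> \<in> Lp M (2 + eps) \<Longrightarrow> \<eta> \<in> Lp M (2 + eps) \<Longrightarrow> (\<lambda>x. (\<xi> x - \<eta> x)\<^sup>2) \<in> Lp M (1 + eps/2)"
  using Lp_power2[OF Lp_diff'[of \<xi> \<eta>]] by (simp add: add_divide_distrib)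

lemma Lp_of_Lp_double: "\<xi> \<in> Lp M (4 + 2*eps) \<Longrightarrow> \<xi> \<in> Lp M (2 + eps)"
  by (rule Lp_lower_exponent) (use eps_pos in \<open>auto intro: finite_measure_axioms\<close>)

lemma rho_mono:
  "X \<in> Lp M (2 + eps) \<Longrightarrow> Y \<in> Lp M (2 + eps) \<Longrightarrow> (AE x in M. X x \<le> Y x) \<Longrightarrow> \<rho> X \<le> \<rho> Y"
  using sublinear unfolding sublinear_op_def by blast

lemma rho_const: "\<rho> (\<lambda>_. c) = c"
  using sublinear unfolding sublinear_op_def by blast

lemma rho_subadditive:
  "X \<in> Lp M (2 + eps) \<Longrightarrow> Y \<in> Lp M (2 + eps) \<Longrightarrow> \<rho> (\<lambda>x. X x + Y x) \<le> \<rho> X + \<rho> Y"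
  using sublinear unfolding sublinear_op_def by blast

lemma rho_pos_homogeneous: "X \<in> Lp M (2 + eps) \<Longrightarrow> 0 \<le> l \<Longrightarrow> \<rho> (\<lambda>x. l * X x) = l * \<rho> X"
  using sublinear unfolding sublinear_op_def by blast

lemma rho_nonneg:
  assumes "X \<in> Lp M (2 + eps)" "\<And>x. 0 \<le> X x"
  shows "0 \<le> \<rho> X"
  using rho_mono[OF Lp_const' assms(1), of 0] assms(2) rho_const[of 0] by simp

text \<open>Along a subsequence \<open>k\<^sub>j\<close> with fast-decaying norms, the functions \<open>(j + 1) T (k\<^sub>j)\<close>
  have a common majorant \<open>Z\<close> in \<open>L\<^sup>2\<^sup>+\<^sup>\<epsilon>\<close>.\<close>

lemma rho_decseq_majorant:
  fixes T :: "nat \<Rightarrow> 'a \<Rightarrow> real"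
  assumes T: "\<And>k. T k \<in> Lp M (2 + eps)" and nonneg: "\<And>k x. 0 \<le> T k x"
    and dec: "\<And>k x. T (Suc k) x \<le> T k x"
    and lim: "(\<lambda>k. integral\<^sup>L M (\<lambda>x. \<bar>T k x\<bar> powr (2 + eps))) \<longlonglongrightarrow> 0"
  obtains Z kk where "\<And>j k. kk j \<le> k \<Longrightarrow> (real j + 1) * \<rho> (T k) \<le> \<rho> Z"
proof -
  let ?r = "2 + eps"
  have "\<exists>k. integral\<^sup>L M (\<lambda>x. \<bar>T k x\<bar> powr ?r) < (1/2)^j / (real j + 1) powr ?r" for j
    using order_tendstoD(2)[OF lim, of "(1/2)^j / (real j + 1) powr ?r"]
    by (auto simp: eventually_sequentially)
  then obtain kk where kk: "\<And>j. integral\<^sup>L M (\<lambda>x. \<bar>T (kk j) x\<bar> powr ?r) < (1/2)^j / (real j + 1) powr ?r"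
    by metis
  have small: "integral\<^sup>L M (\<lambda>x. \<bar>(real j + 1) * T (kk j) x\<bar> powr ?r) \<le> (1/2)^j" for j
    using mult_left_mono[OF less_imp_le[OF kk[of j]], of "(real j + 1) powr ?r"]
    by (simp add: abs_mult powr_mult)
  have "0 < ?r" using eps_pos by simp
  from Lp_common_majorant[OF this Lp_cmult[OF T] _ small] nonneg
  obtain Z where Z: "Z \<in> Lp M ?r" and major: "\<And>j. AE x in M. (real j + 1) * T (kk j) x \<le> Z x"
    by fastforce
  have antimono: "T k x \<le> T k' x" if "k' \<le> k" for k k' x
    using that by (induction k) (auto simp: le_Suc_eq intro: order_trans[OF dec])
  have "(real j + 1) * \<rho> (T k) \<le> \<rho> Z" if "kk j \<le> k" for j k
  proof -
    have "(real j + 1) * \<rho> (T k) = \<rho> (\<lambda>x. (real j + 1) * T k x)"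
      by (rule rho_pos_homogeneous[symmetric, OF T]) simp
    also have "\<dots> \<le> \<rho> Z"
      using major[of j]
    proof (intro rho_mono[OF Lp_cmult[OF T] Z], eventually_elim)
      case (elim x)
      have "(real j + 1) * T k x \<le> (real j + 1) * T (kk j) x"
        using antimono[OF that] by (intro mult_left_mono) auto
      thus ?case using elim by linarith
    qed
    finally show ?thesis .
  qed
  thus ?thesis using that by blast
qed

lemma rho_decseq_tendsto_zero:
  fixes T :: "nat \<Rightarrow> 'a \<Rightarrow> real"
  assumes T: "\<And>k. T k \<in> Lp M (2 + eps)" and nonneg: "\<And>k x. 0 \<le> T k x"
    and dec: "\<And>k x. T (Suc k) x \<le> T k x"
    and lim: "(\<lambda>k. integral\<^sup>L M (\<lambda>x. \<bar>T k x\<bar> powr (2 + eps))) \<longlonglongrightarrow> 0"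
  shows "(\<lambda>k. \<rho> (T k)) \<longlonglongrightarrow> 0"
proof (rule order_tendstoI)
  fix a :: real assume "a < 0"
  thus "eventually (\<lambda>k. a < \<rho> (T k)) sequentially"
    using rho_nonneg[OF T nonneg] by (auto intro: always_eventually less_le_trans)
next
  fix a :: real assume a: "0 < a"
  obtain kk Z where bound: "\<And>j k. kk j \<le> k \<Longrightarrow> (real j + 1) * \<rho> (T k) \<le> \<rho> Z"
    by (rule rho_decseq_majorant[OF T nonneg dec lim]) blast
  obtain j :: nat where j: "\<rho> Z / a < real j" using reals_Archimedean2 by blast
  have "\<rho> (T k) < a" if "kk j \<le> k" for k
  proof -
    have "(real j + 1) * \<rho> (T k) < (real j + 1) * a"
      using bound[OF that] j a by (simp add: field_simps)
    thus ?thesis by (simp add: mult_less_cancel_left_pos add_pos_nonneg)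
  qed
  thus "eventually (\<lambda>k. \<rho> (T k) < a) sequentially"
    unfolding eventually_sequentially by blast
qed

lemma densD:
  assumes "f \<in> D"
  shows "f \<in> borel_measurable M" "AE x in M. 0 \<le> f x" "integrable M f" "integral\<^sup>L M f = 1"
    and "X \<in> Lp M (2 + eps) \<Longrightarrow> integrable M (\<lambda>x. f x * X x)"
    and "X \<in> Lp M (2 + eps) \<Longrightarrow> E f X \<le> \<rho> X"
  using assms by (auto simp: dens_def)

lemma dens_measurable[measurable_dest]: "f \<in> D \<Longrightarrow> f \<in> borel_measurable M"
  by (rule densD)

lemma dens_convex:
  assumes f: "f \<in> D" and g: "g \<in> D" and t: "0 \<le> t" "t \<le> 1"
  shows "(\<lambda>x. (1 - t) * f x + t * g x) \<in> D"
  unfolding dens_def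
proof (intro CollectI conjI ballI)
  show "(\<lambda>x. (1 - t) * f x + t * g x) \<in> borel_measurable M" using f g by measurable
  show "AE x in M. 0 \<le> (1 - t) * f x + t * g x"
    using densD(2)[OF f] densD(2)[OF g] by eventually_elim (use t in auto)
  show "integrable M (\<lambda>x. (1 - t) * f x + t * g x)" using densD(3)[OF f] densD(3)[OF g] by simp
  show "integral\<^sup>L M (\<lambda>x. (1 - t) * f x + t * g x) = 1"
    using densD(3,4)[OF f] densD(3,4)[OF g] by simp
  fix X assume X: "X \<in> Lp M (2 + eps)"
  have mix: "(\<lambda>x. ((1 - t) * f x + t * g x) * X x) = (\<lambda>x. (1 - t) * (f x * X x) + t * (g x * X x))"
    by (auto simp: algebra_simps)
  show "integrable M (\<lambda>x. ((1 - t) * f x + t * g x) * X x)"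
    unfolding mix using densD(5)[OF f X] densD(5)[OF g X] by simp
  have "E (\<lambda>x. (1 - t) * f x + t * g x) X = (1 - t) * E f X + t * E g X"
    unfolding mix using densD(5)[OF f X] densD(5)[OF g X] by simp
  also have "\<dots> \<le> (1 - t) * \<rho> X + t * \<rho> X"
    using densD(6)[OF f X] densD(6)[OF g X] t by (intro add_mono mult_left_mono) auto
  finally show "E (\<lambda>x. (1 - t) * f x + t * g x) X \<le> \<rho> X" by (simp add: algebra_simps)
qed

end

locale dominated_linear = sublinear_expectation +
  fixes L :: "('a \<Rightarrow> real) \<Rightarrow> real"
  assumes L_add: "X \<in> Lp M (2 + eps) \<Longrightarrow> Y \<in> Lp M (2 + eps) \<Longrightarrow> L (\<lambda>x. X x + Y x) = L X + L Y"
    and L_cmult: "X \<in> Lp M (2 + eps) \<Longrightarrow> L (\<lambda>x. c * X x) = c * L X"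
    and L_le_rho: "X \<in> Lp M (2 + eps) \<Longrightarrow> L X \<le> \<rho> X"
begin

lemma L_diff: "X \<in> Lp M (2 + eps) \<Longrightarrow> Y \<in> Lp M (2 + eps) \<Longrightarrow> L (\<lambda>x. X x - Y x) = L X - L Y"
  using L_add[OF _ Lp_uminus] L_cmult[of _ "-1"] by fastforce

lemma L_zero: "L (\<lambda>x. 0) = 0"
  using L_cmult[OF Lp_const', of 0] by simp

lemma L_nonneg:
  assumes X: "X \<in> Lp M (2 + eps)" and nonneg: "AE x in M. 0 \<le> X x"
  shows "0 \<le> L X"
proof -
  have "\<rho> (\<lambda>x. - X x) \<le> \<rho> (\<lambda>x. 0)"
    using nonneg by (intro rho_mono[OF Lp_uminus[OF X] Lp_const']) (auto elim!: eventually_mono)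
  hence "L (\<lambda>x. - X x) \<le> \<rho> (\<lambda>x. 0)" using L_le_rho[OF Lp_uminus[OF X]] by simp
  thus ?thesis using L_cmult[OF X, of "-1"] rho_const[of 0] by simp
qed

lemma L_mono: "X \<in> Lp M (2 + eps) \<Longrightarrow> Y \<in> Lp M (2 + eps) \<Longrightarrow> (AE x in M. X x \<le> Y x) \<Longrightarrow> L X \<le> L Y"
  using L_nonneg[OF Lp_diff', of Y X] L_diff[of Y X] by (auto elim!: eventually_mono)

lemma L_cong: "X \<in> Lp M (2 + eps) \<Longrightarrow> Y \<in> Lp M (2 + eps) \<Longrightarrow> (AE x in M. X x = Y x) \<Longrightarrow> L X = L Y"
  by (rule antisym; rule L_mono) (auto elim!: eventually_mono)

lemma L_one: "L (\<lambda>x. 1) = 1"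
  using L_le_rho[OF Lp_const', of 1] L_le_rho[OF Lp_const', of "-1"] rho_const
    L_cmult[OF Lp_const', of "-1" 1] by simp

lemma L_decseq_tendsto_zero:
  fixes T :: "nat \<Rightarrow> 'a \<Rightarrow> real"
  assumes T: "\<And>k. T k \<in> Lp M (2 + eps)" and nonneg: "\<And>k x. 0 \<le> T k x"
    and dec: "\<And>k x. T (Suc k) x \<le> T k x"
    and lim: "(\<lambda>k. integral\<^sup>L M (\<lambda>x. \<bar>T k x\<bar> powr (2 + eps))) \<longlonglongrightarrow> 0"
  shows "(\<lambda>k. L (T k)) \<longlonglongrightarrow> 0"
proof (rule tendsto_sandwich[where f = "\<lambda>k. 0" and h = "\<lambda>k. \<rho> (T k)"])
  show "\<forall>\<^sub>F k in sequentially. 0 \<le> L (T k)" using L_nonneg[OF T] nonneg by auto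
  show "\<forall>\<^sub>F k in sequentially. L (T k) \<le> \<rho> (T k)" using L_le_rho[OF T] by auto
qed (simp_all add: rho_decseq_tendsto_zero[OF T nonneg dec lim])

lemma L_incseq_tendsto:
  fixes U :: "nat \<Rightarrow> 'a \<Rightarrow> real"
  assumes u: "u \<in> Lp M (2 + eps)" and U: "\<And>i. U i \<in> Lp M (2 + eps)"
    and inc: "incseq U" and nonneg: "\<And>i x. 0 \<le> U i x"
    and bounds: "\<And>i x. x \<in> space M \<Longrightarrow> U i x \<le> u x"
    and lim: "\<And>x. x \<in> space M \<Longrightarrow> (\<lambda>i. U i x) \<longlonglongrightarrow> u x"
  shows "(\<lambda>i. L (U i)) \<longlonglongrightarrow> L u"
proof -
  define T where "T = (\<lambda>i x. max 0 (u x - U i x))"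
  have T: "T i \<in> Lp M (2 + eps)" for i
    unfolding T_def using eps_pos Lp_measurable[OF u] Lp_measurable[OF U]
    by (intro Lp_dominated[OF Lp_diff'[OF u U[of i]]]) auto
  have LT: "L (T i) = L u - L (U i)" for i
    using L_cong[OF T Lp_diff'[OF u U], of i i] L_diff[OF u U] bounds
    by (auto simp: T_def intro!: AE_I2)
  have "(\<lambda>i. L (T i)) \<longlonglongrightarrow> 0"
  proof (rule L_decseq_tendsto_zero[OF T])
    show "T (Suc k) x \<le> T k x" for k x
      using inc unfolding T_def incseq_Suc_iff le_fun_def by (simp add: max.coboundedI2)
    show "(\<lambda>k. integral\<^sup>L M (\<lambda>x. \<bar>T k x\<bar> powr (2 + eps))) \<longlonglongrightarrow> 0"
      unfolding T_def using eps_pos Lp_measurable[OF U]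
      by (intro Lp_incseq_gap_tendsto_zero[OF _ u _ nonneg bounds lim]) auto
  qed (simp add: T_def)
  hence "(\<lambda>i. L u - L (T i)) \<longlonglongrightarrow> L u - 0" by (intro tendsto_intros)
  thus ?thesis using LT by simp
qed

definition L_measure :: "'a measure" where
  "L_measure = measure_of (space M) (sets M) (\<lambda>A. ennreal (L (indicator A)))"

lemma Lp_indicator': "A \<in> sets M \<Longrightarrow> (indicator A :: 'a \<Rightarrow> real) \<in> Lp M (2 + eps)"
  by (rule Lp_indicator) (use eps_pos in \<open>auto intro: finite_measure_axioms\<close>)

lemma indicator_empty_real: "(indicator {} :: 'a \<Rightarrow> real) = (\<lambda>x. 0)"
  by (auto simp: fun_eq_iff)

lemma L_countably_additive: "countably_additive (sets M) (\<lambda>A. ennreal (L (indicator A)))"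
proof (rule sets.empty_continuous_imp_countably_additive)
  show "positive (sets M) (\<lambda>A. ennreal (L (indicator A)))"
    using L_zero by (simp add: positive_def indicator_empty_real)
  show "additive (sets M) (\<lambda>A. ennreal (L (indicator A)))"
    unfolding additive_def
  proof (intro ballI impI)
    fix A B assume A: "A \<in> sets M" and B: "B \<in> sets M" and disj: "A \<inter> B = {}"
    have "(indicator (A \<union> B) :: 'a \<Rightarrow> real) = (\<lambda>x. indicator A x + indicator B x)"
      using disj by (auto simp: fun_eq_iff indicator_def)
    thus "ennreal (L (indicator (A \<union> B))) = ennreal (L (indicator A)) + ennreal (L (indicator B))"
      using L_add[OF Lp_indicator'[OF A] Lp_indicator'[OF B]]
        L_nonneg[OF Lp_indicator'[OF A]] L_nonneg[OF Lp_indicator'[OF B]]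
      by (simp add: ennreal_plus)
  qed
  fix A :: "nat \<Rightarrow> 'a set" assume A: "range A \<subseteq> sets M" "decseq A" "(\<Inter>i. A i) = {}"
  have "(\<lambda>i. L (indicator (A i))) \<longlonglongrightarrow> 0"
  proof (rule L_decseq_tendsto_zero)
    show "indicator (A (Suc k)) x \<le> (indicator (A k) x :: real)" for k x
      using A(2) by (auto simp: indicator_def decseq_Suc_iff)
    have "(\<lambda>k. measure M (A k)) \<longlonglongrightarrow> measure M (\<Inter>i. A i)"
      by (rule finite_Lim_measure_decseq[OF A(1,2)])
    moreover have "\<bar>indicator (A k) x :: real\<bar> powr (2 + eps) = indicator (A k) x" for k x
      using eps_pos by (auto simp: indicator_def)
    ultimately show "(\<lambda>k. integral\<^sup>L M (\<lambda>x. \<bar>indicator (A k) x :: real\<bar> powr (2 + eps))) \<longlonglongrightarrow> 0"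
      using A(1,3) by auto
  qed (use A(1) Lp_indicator' in auto)
  thus "(\<lambda>i. ennreal (L (indicator (A i)))) \<longlonglongrightarrow> 0"
    using tendsto_ennrealI by fastforce
qed (simp add: ennreal_neq_top)

lemma emeasure_L_measure: "A \<in> sets M \<Longrightarrow> emeasure L_measure A = ennreal (L (indicator A))"
  unfolding L_measure_def
  by (rule emeasure_measure_of_sigma[OF sets.sigma_algebra_axioms _ L_countably_additive])
    (auto simp: positive_def L_zero indicator_empty_real)

lemma sets_L_measure: "sets L_measure = sets M"
  unfolding L_measure_def by simp

lemma absolutely_continuous_L_measure: "absolutely_continuous M L_measure"
  unfolding absolutely_continuous_def
proof
  fix A assume A: "A \<in> null_sets M"
  hence "L (indicator A) = L (\<lambda>x. 0)"
    using AE_not_in[OF A] by (intro L_cong Lp_indicator' Lp_const') (auto elim!: eventually_mono)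
  thus "A \<in> null_sets L_measure"
    using A emeasure_L_measure[of A] L_zero by (auto simp: null_sets_def sets_L_measure)
qed

lemma L_density_exists:
  "\<exists>g. g \<in> borel_measurable M \<and> (\<forall>x. 0 \<le> g x) \<and>
     (\<forall>A\<in>sets M. integrable M (\<lambda>x. g x * indicator A x) \<and> E g (indicator A) = L (indicator A))"
proof -
  obtain f where f[measurable]: "f \<in> borel_measurable M" and dens_f: "density M f = L_measure"
    using Radon_Nikodym[OF absolutely_continuous_L_measure sets_L_measure] by blast
  have f_indicator: "(\<integral>\<^sup>+ x. f x * indicator A x \<partial>M) = ennreal (L (indicator A))"
    if "A \<in> sets M" for A
    using emeasure_L_measure[OF that] that by (simp add: dens_f[symmetric] emeasure_density)
  have "(\<integral>\<^sup>+ x. f x \<partial>M) = (\<integral>\<^sup>+ x. f x * indicator (space M) x \<partial>M)"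
    by (rule nn_integral_cong) simp
  also have "\<dots> = ennreal (L (indicator (space M)))" by (rule f_indicator) simp
  finally have "AE x in M. f x \<noteq> \<infinity>" by (intro nn_integral_noteq_infinite) simp_all
  hence g_f: "AE x in M. ennreal (enn2real (f x)) = f x"
    by eventually_elim (auto simp: ennreal_enn2real_if)
  have "integrable M (\<lambda>x. enn2real (f x) * indicator A x)
      \<and> E (\<lambda>x. enn2real (f x)) (indicator A) = L (indicator A)"
    if A[measurable]: "A \<in> sets M" for A
  proof -
    have nn: "(\<integral>\<^sup>+ x. ennreal (enn2real (f x) * indicator A x) \<partial>M) = ennreal (L (indicator A))"
      using f_indicator[OF A] g_f
      by (subst nn_integral_cong_AE[where v = "\<lambda>x. f x * indicator A x"])
        (auto simp: indicator_def elim!: eventually_mono)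
    have int: "integrable M (\<lambda>x. enn2real (f x) * indicator A x)"
      by (rule integrableI_nn_integral_finite[OF _ _ nn]) auto
    hence "ennreal (E (\<lambda>x. enn2real (f x)) (indicator A)) = ennreal (L (indicator A))"
      using nn_integral_eq_integral[OF int] nn by simp
    thus ?thesis
      using int L_nonneg[OF Lp_indicator'[OF A]] by (subst (asm) ennreal_inj) auto
  qed
  thus ?thesis by (intro exI[of _ "\<lambda>x. enn2real (f x)"]) auto
qed

context
  fixes g assumes g[measurable]: "g \<in> borel_measurable M" and g_nonneg: "\<And>x. 0 \<le> g x"
    and g_indicator: "\<And>A. A \<in> sets M \<Longrightarrow>
      integrable M (\<lambda>x. g x * indicator A x) \<and> E g (indicator A) = L (indicator A)"
begin

lemma density_represents_L_incseq:
  fixes U :: "nat \<Rightarrow> 'a \<Rightarrow> real"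
  assumes u: "u \<in> Lp M (2 + eps)" and U_meas: "\<And>i. U i \<in> borel_measurable M"
    and nonneg: "\<And>i x. 0 \<le> U i x" and inc: "incseq U"
    and lim: "\<And>x. x \<in> space M \<Longrightarrow> (\<lambda>i. U i x) \<longlonglongrightarrow> u x"
    and represents: "\<And>i. U i \<in> Lp M (2 + eps) \<Longrightarrow> integrable M (\<lambda>x. g x * U i x) \<and> E g (U i) = L (U i)"
  shows "integrable M (\<lambda>x. g x * u x) \<and> E g u = L u"
proof -
  have bounds: "U i x \<le> u x" if "x \<in> space M" for i x
    using inc incseq_le[OF _ lim[OF that]] by (auto simp: incseq_def le_fun_def)
  have "\<bar>U i x\<bar> \<le> \<bar>u x\<bar>" if "x \<in> space M" for i x
    using bounds[OF that, of i] nonneg[of i x] by simp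
  hence U: "U i \<in> Lp M (2 + eps)" for i
    using U_meas eps_pos by (intro Lp_dominated[OF u]) (auto intro!: AE_I2)
  have IH: "integrable M (\<lambda>x. g x * U i x)" "E g (U i) = L (U i)" for i
    using represents[OF U] by auto
  have E_lim: "(\<lambda>i. E g (U i)) \<longlonglongrightarrow> L u"
    unfolding IH(2) by (rule L_incseq_tendsto[OF u U inc nonneg bounds lim])
  have mono: "AE x in M. mono (\<lambda>i. g x * U i x)"
    using inc g_nonneg by (auto simp: incseq_def mono_def le_fun_def intro!: mult_left_mono)
  have gU_lim: "AE x in M. (\<lambda>i. g x * U i x) \<longlonglongrightarrow> g x * u x"
    by (intro AE_I2 tendsto_intros lim)
  have "(\<lambda>x. g x * u x) \<in> borel_measurable M" using Lp_measurable[OF u] by measurable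
  thus ?thesis
    using integrable_monotone_convergence[OF IH(1) mono gU_lim E_lim]
      integral_monotone_convergence[OF IH(1) mono gU_lim E_lim] by blast
qed

lemma density_represents_L_nonneg:
  assumes "u \<in> borel_measurable M" "\<And>x. 0 \<le> u x"
  shows "u \<in> Lp M (2 + eps) \<longrightarrow> integrable M (\<lambda>x. g x * u x) \<and> E g u = L u"
  using assms
proof (induction u rule: borel_measurable_induct_real)
  case (set A)
  thus ?case using g_indicator by blast
next
  case (mult u c)
  show ?case
  proof
    assume cu: "(\<lambda>x. c * u x) \<in> Lp M (2 + eps)"
    show "integrable M (\<lambda>x. g x * (c * u x)) \<and> E g (\<lambda>x. c * u x) = L (\<lambda>x. c * u x)"
    proof (cases "c = 0")
      case False
      hence "u \<in> Lp M (2 + eps)" using Lp_cmult[OF cu, of "1/c"] by simp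
      thus ?thesis using mult.IH L_cmult by (simp add: mult.left_commute)
    qed (simp add: L_zero)
  qed
next
  case (add u v)
  show ?case
  proof
    assume vu: "(\<lambda>x. v x + u x) \<in> Lp M (2 + eps)"
    have "u \<in> Lp M (2 + eps)" "v \<in> Lp M (2 + eps)"
      using add eps_pos by (auto intro!: Lp_dominated[OF vu])
    thus "integrable M (\<lambda>x. g x * (v x + u x)) \<and> E g (\<lambda>x. v x + u x) = L (\<lambda>x. v x + u x)"
      using add.IH L_add by (simp add: distrib_left)
  qed
next
  case (seq U)
  thus ?case using density_represents_L_incseq[of _ U] by blast
qed

lemma density_represents_L:
  assumes X: "X \<in> Lp M (2 + eps)"
  shows "integrable M (\<lambda>x. g x * X x)" "E g X = L X"
proof -
  have [measurable]: "X \<in> borel_measurable M" using X by (rule Lp_measurable)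
  define Xp Xm where "Xp = (\<lambda>x. max (X x) 0)" and "Xm = (\<lambda>x. max (- X x) 0)"
  have XpL: "Xp \<in> Lp M (2 + eps)" and XmL: "Xm \<in> Lp M (2 + eps)"
    unfolding Xp_def Xm_def using eps_pos by (auto intro!: Lp_dominated[OF X])
  note Pp = density_represents_L_nonneg[of Xp] and Pm = density_represents_L_nonneg[of Xm]
  have X_eq: "X = (\<lambda>x. Xp x - Xm x)" by (auto simp: fun_eq_iff Xp_def Xm_def max_def)
  have "(\<lambda>x. g x * X x) = (\<lambda>x. g x * Xp x - g x * Xm x)"
    by (subst X_eq) (simp add: algebra_simps)
  moreover have "L X = L Xp - L Xm" by (subst X_eq) (rule L_diff[OF XpL XmL])
  ultimately show "integrable M (\<lambda>x. g x * X x)" "E g X = L X"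
    using Pp Pm XpL XmL by (auto simp: Xp_def Xm_def)
qed

lemma density_in_dens: "g \<in> D"
  unfolding dens_def
proof (intro CollectI conjI ballI)
  show "integrable M g" "integral\<^sup>L M g = 1"
    using density_represents_L[OF Lp_const', of 1] L_one by auto
  show "X \<in> Lp M (2 + eps) \<Longrightarrow> E g X \<le> \<rho> X" for X
    using density_represents_L(2) L_le_rho by simp
qed (use g_nonneg density_represents_L(1) in auto)

end

end

lemma (in sublinear_expectation) dens_nonempty: "D \<noteq> {}"
proof -
  interpret sublinear_on "Lp M (2 + eps)" \<rho>
    by unfold_locales (auto intro: Lp_add' Lp_cmult Lp_const' rho_subadditive rho_pos_homogeneous)
  obtain L where "\<forall>X\<in>Lp M (2 + eps). \<forall>Y\<in>Lp M (2 + eps). L (\<lambda>x. X x + Y x) = L X + L Y"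
    "\<forall>X\<in>Lp M (2 + eps). \<forall>c. L (\<lambda>x. c * X x) = c * L X" "\<forall>X\<in>Lp M (2 + eps). L X \<le> \<rho> X"
    using Hahn_Banach_dominated_linear by blast
  then interpret dominated_linear M eps \<rho> L
    by unfold_locales auto
  show ?thesis using L_density_exists density_in_dens by blast
qed

section \<open>Weak compactness of the densities\<close>

lemma continuous_map_weak_top_expectation:
  assumes "Y \<in> Lp M q"
  shows "continuous_map (weak_top M p q) euclideanreal (\<lambda>f. integral\<^sup>L M (\<lambda>x. f x * Y x))"
proof -
  have "continuous_map (weak_top M p q) euclideanreal
     ((\<lambda>h. h Y) \<circ> (\<lambda>f g. if g \<in> Lp M q then integral\<^sup>L M (\<lambda>x. f x * g x) else 0))"
    unfolding weak_top_def by (intro continuous_map_pullback continuous_map_product_projection) auto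
  moreover have "(\<lambda>h. h Y) \<circ> (\<lambda>f g. if g \<in> Lp M q then integral\<^sup>L M (\<lambda>x. f x * g x) else 0)
     = (\<lambda>f. integral\<^sup>L M (\<lambda>x. f x * Y x))" using assms by auto
  ultimately show ?thesis by simp
qed

text \<open>Otherwise the open sets \<open>{\<phi> i < w k'}\<close> cover \<open>K\<close>, and a finite subcover fails at the
  \<open>k'\<close> of largest \<open>w\<close> among those used.\<close>

lemma compactin_attains_max_of_min_continuous:
  fixes \<phi> :: "'i \<Rightarrow> 'b \<Rightarrow> real" and w :: "'b \<Rightarrow> real"
  assumes K: "compactin T K" "K \<noteq> {}"
    and cont: "\<And>i. i \<in> I \<Longrightarrow> continuous_map T euclideanreal (\<phi> i)"
    and below: "\<And>i k. i \<in> I \<Longrightarrow> k \<in> K \<Longrightarrow> w k \<le> \<phi> i k"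
    and attained: "\<And>k. k \<in> K \<Longrightarrow> \<exists>i\<in>I. \<phi> i k = w k"
  shows "\<exists>k\<in>K. \<forall>k'\<in>K. w k' \<le> w k"
proof (rule ccontr)
  assume no_max: "\<not> (\<exists>k\<in>K. \<forall>k'\<in>K. w k' \<le> w k)"
  define U where "U = (\<lambda>(i, k'). {k \<in> topspace T. \<phi> i k \<in> {..< w k'}})"
  have "\<forall>B\<in>U ` (I \<times> K). openin T B"
  proof
    fix B assume "B \<in> U ` (I \<times> K)"
    then obtain i k' where "i \<in> I" "B = {k \<in> topspace T. \<phi> i k \<in> {..< w k'}}"
      by (auto simp: U_def)
    thus "openin T B" using openin_continuous_map_preimage[OF cont, of i "{..< w k'}"] by simp
  qed
  moreover have "K \<subseteq> \<Union>(U ` (I \<times> K))"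
  proof
    fix k assume k: "k \<in> K"
    obtain k' where k': "k' \<in> K" "w k < w k'" using no_max k by (auto simp: not_le)
    obtain i where i: "i \<in> I" "\<phi> i k = w k" using attained[OF k] by blast
    have "k \<in> U (i, k')" using k' i compactin_subset_topspace[OF K(1)] k by (auto simp: U_def)
    thus "k \<in> \<Union>(U ` (I \<times> K))" using i k' by blast
  qed
  ultimately obtain F where F: "finite F" "F \<subseteq> U ` (I \<times> K)" "K \<subseteq> \<Union>F"
    using K(1) unfolding compactin_def by blast
  then obtain G where G: "G \<subseteq> I \<times> K" "finite G" "K \<subseteq> \<Union>(U ` G)"
    using finite_subset_image[OF F(1,2)] by blast
  hence "G \<noteq> {}" using K(2) by auto
  define m where "m = Max ((\<lambda>z. w (snd z)) ` G)"
  have "m \<in> (\<lambda>z. w (snd z)) ` G" unfolding m_def using G(2) \<open>G \<noteq> {}\<close> by (intro Max_in) auto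
  then obtain z where z: "z \<in> G" "w (snd z) = m" by auto
  have "snd z \<in> K" using G(1) z(1) by auto
  then obtain z' where z': "z' \<in> G" "snd z \<in> U z'" using G(3) by blast
  have "w (snd z) \<le> \<phi> (fst z') (snd z)" using G(1) z z' by (intro below) auto
  also have "\<dots> < w (snd z')" using z' by (auto simp: U_def split: prod.splits)
  also have "\<dots> \<le> m" unfolding m_def using G(2) z' by (intro Max_ge) auto
  finally show False using z by simp
qed

locale compact_dens = sublinear_expectation +
  assumes standing: "standing_assm M eps \<rho>"
begin

abbreviation \<rho>\<^sub>D :: "('a \<Rightarrow> real) \<Rightarrow> real" where "\<rho>\<^sub>D \<equiv> rho_ext M eps \<rho>"

lemma conjugate_exponents: "1 / (1 + 2/eps) + 1 / (1 + eps/2) = 1"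
proof -
  have "1 / (1 + 2/eps) = eps / (eps + 2)" "1 / (1 + eps/2) = 2 / (eps + 2)"
    using eps_pos by (simp_all add: field_simps)
  thus ?thesis using eps_pos by (simp add: add_divide_distrib[symmetric])
qed

lemma exponents_pos: "0 < 1 + 2/eps" "0 < 1 + eps/2"
  using eps_pos by (auto intro: add_pos_pos)

lemma dens_Lp: "f \<in> D \<Longrightarrow> f \<in> Lp M (1 + 2/eps)"
  using standing unfolding standing_assm_def by auto

lemma dens_weakly_compact: "compactin (weak_top M (1 + 2/eps) (1 + eps/2)) D"
  using standing unfolding standing_assm_def by auto

lemma integrable_dens_mult:
  assumes "f \<in> D" "Y \<in> Lp M (1 + eps/2)"
  shows "integrable M (\<lambda>x. f x * Y x)"
proof -
  have "(\<lambda>x. f x * Y x) \<in> Lp M 1"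
    by (rule Lp_mult[OF dens_Lp[OF assms(1)] assms(2)]) (use exponents_pos conjugate_exponents in auto)
  thus ?thesis by (simp add: Lp_1_iff_integrable)
qed

lemma dens_expectation_bounded:
  assumes Y: "Y \<in> Lp M (1 + eps/2)"
  shows "bdd_above ((\<lambda>f. E f Y) ` D)"
proof -
  let ?p = "1 + 2/eps" and ?q = "1 + eps/2"
  obtain B where B: "\<And>f. f \<in> D \<Longrightarrow> Lp_norm M ?p f \<le> B"
    using standing unfolding standing_assm_def by auto
  have "E f Y \<le> max B 0 powr ?p / ?p + integral\<^sup>L M (\<lambda>x. \<bar>Y x\<bar> powr ?q) / ?q" if f: "f \<in> D" for f
  proof -
    have "integral\<^sup>L M (\<lambda>x. \<bar>f x\<bar> powr ?p) = (integral\<^sup>L M (\<lambda>x. \<bar>f x\<bar> powr ?p) powr (1/?p)) powr ?p"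
      using exponents_pos by (simp add: powr_powr)
    also have "\<dots> = Lp_norm M ?p f powr ?p" by (simp add: Lp_norm_def)
    also have "\<dots> \<le> max B 0 powr ?p"
      using B[OF f] eps_pos by (intro powr_mono2) (auto simp: Lp_norm_def)
    finally have norm_f: "integral\<^sup>L M (\<lambda>x. \<bar>f x\<bar> powr ?p) \<le> max B 0 powr ?p" .
    have "f x * Y x \<le> \<bar>f x\<bar> powr ?p / ?p + \<bar>Y x\<bar> powr ?q / ?q" for x
      using Young_inequality_powr[of ?p ?q 1 "f x" "Y x"] conjugate_exponents exponents_pos
      by (auto intro: order_trans[OF abs_ge_self])
    hence "E f Y \<le> integral\<^sup>L M (\<lambda>x. \<bar>f x\<bar> powr ?p / ?p + \<bar>Y x\<bar> powr ?q / ?q)"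
      using Lp_integrable_powr[OF dens_Lp[OF f]] Lp_integrable_powr[OF Y] integrable_dens_mult[OF f Y]
      by (intro integral_mono) auto
    also have "\<dots> = integral\<^sup>L M (\<lambda>x. \<bar>f x\<bar> powr ?p) / ?p + integral\<^sup>L M (\<lambda>x. \<bar>Y x\<bar> powr ?q) / ?q"
      using Lp_integrable_powr[OF dens_Lp[OF f]] Lp_integrable_powr[OF Y] by simp
    finally show ?thesis
      using divide_right_mono[OF norm_f, of ?p] exponents_pos by linarith
  qed
  thus ?thesis by (intro bdd_aboveI2)
qed

lemma rhoD_ge: "Y \<in> Lp M (1 + eps/2) \<Longrightarrow> f \<in> D \<Longrightarrow> E f Y \<le> \<rho>\<^sub>D Y"
  unfolding rho_ext_def by (rule cSUP_upper[OF _ dens_expectation_bounded])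

lemma rhoD_least: "(\<And>f. f \<in> D \<Longrightarrow> E f Y \<le> c) \<Longrightarrow> \<rho>\<^sub>D Y \<le> c"
  unfolding rho_ext_def using dens_nonempty by (intro cSUP_least) auto

lemma rhoD_attained:
  assumes Y: "Y \<in> Lp M (1 + eps/2)"
  obtains f where "f \<in> D" "E f Y = \<rho>\<^sub>D Y"
proof -
  have "compact ((\<lambda>f. E f Y) ` D)"
    using image_compactin[OF dens_weakly_compact continuous_map_weak_top_expectation[OF Y]] by simp
  then obtain f where f: "f \<in> D" "\<forall>g\<in>D. E g Y \<le> E f Y"
    using compact_attains_sup[of "(\<lambda>f. E f Y) ` D"] dens_nonempty by auto
  hence "\<rho>\<^sub>D Y = E f Y" unfolding rho_ext_def by (intro cSup_eq_maximum) auto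
  thus ?thesis using that f by simp
qed

lemma rhoD_mono:
  assumes "Y \<in> Lp M (1 + eps/2)" "Z \<in> Lp M (1 + eps/2)" "AE x in M. Y x \<le> Z x"
  shows "\<rho>\<^sub>D Y \<le> \<rho>\<^sub>D Z"
proof (rule rhoD_least)
  fix f assume f: "f \<in> D"
  have "AE x in M. f x * Y x \<le> f x * Z x"
    using densD(2)[OF f] assms(3) by eventually_elim (simp add: mult_left_mono)
  hence "E f Y \<le> E f Z"
    using integrable_dens_mult[OF f assms(1)] integrable_dens_mult[OF f assms(2)]
    by (intro integral_mono_AE)
  thus "E f Y \<le> \<rho>\<^sub>D Z" using rhoD_ge[OF assms(2) f] by linarith
qed

lemma rhoD_nonneg:
  assumes "Y \<in> Lp M (1 + eps/2)" "AE x in M. 0 \<le> Y x"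
  shows "0 \<le> \<rho>\<^sub>D Y"
proof -
  obtain f where f: "f \<in> D" using dens_nonempty by auto
  have "AE x in M. 0 \<le> f x * Y x" using densD(2)[OF f] assms(2) by eventually_elim simp
  hence "0 \<le> E f Y" by (rule integral_nonneg_AE)
  thus ?thesis using rhoD_ge[OF assms(1) f] by linarith
qed

lemma rhoD_cmult:
  assumes Y: "Y \<in> Lp M (1 + eps/2)" and c: "0 < c"
  shows "\<rho>\<^sub>D (\<lambda>x. c * Y x) = c * \<rho>\<^sub>D Y"
proof -
  have le: "\<rho>\<^sub>D (\<lambda>x. c * Y x) \<le> c * \<rho>\<^sub>D Y" if "Y \<in> Lp M (1 + eps/2)" "0 < c" for c Y
    using rhoD_ge[OF that(1)] that(2) by (intro rhoD_least) (simp add: mult.left_commute)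
  have "\<rho>\<^sub>D Y \<le> (1/c) * \<rho>\<^sub>D (\<lambda>x. c * Y x)"
    using le[OF Lp_cmult[OF Y, of c], of "1/c"] c by simp
  thus ?thesis using le[OF Y c] c by (simp add: field_simps)
qed

end

section \<open>Minimisers over \<open>L\<^sup>2\<^sup>+\<^sup>\<epsilon>\<close> of the sub-\<open>\<sigma>\<close>-algebra\<close>

locale stable_proper = compact_dens +
  fixes C :: "'a measure"
  assumes eps_less_1: "eps < 1" and subalg: "subalgebra M C"
    and stable: "stable M C eps \<rho>" and proper: "proper M eps \<rho>"
begin

sublocale sigma_finite_subalgebra M C
proof -
  interpret finite_measure_subalgebra M C by unfold_locales (rule subalg)
  show "sigma_finite_subalgebra M C" by unfold_locales
qed

abbreviation LC :: "('a \<Rightarrow> real) set" where "LC \<equiv> Lp_sub M C (2 + eps)"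

lemma measurable_from_C: "g \<in> borel_measurable C \<Longrightarrow> g \<in> borel_measurable M"
  using subalg by (rule measurable_from_subalg)

lemma LC_iff: "\<eta> \<in> LC \<longleftrightarrow> \<eta> \<in> Lp M (2 + eps) \<and> \<eta> \<in> borel_measurable C"
  by (simp add: Lp_sub_def)

lemma LC_add: "\<eta> \<in> LC \<Longrightarrow> \<zeta> \<in> LC \<Longrightarrow> (\<lambda>x. \<eta> x + \<zeta> x) \<in> LC"
  by (auto simp: LC_iff intro: Lp_add')

lemma LC_diff: "\<eta> \<in> LC \<Longrightarrow> \<zeta> \<in> LC \<Longrightarrow> (\<lambda>x. \<eta> x - \<zeta> x) \<in> LC"
  by (auto simp: LC_iff intro: Lp_diff')

lemma LC_cmult: "\<eta> \<in> LC \<Longrightarrow> (\<lambda>x. c * \<eta> x) \<in> LC"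
  by (auto simp: LC_iff intro: Lp_cmult)

lemma LC_const: "(\<lambda>x. c) \<in> LC"
  by (simp add: LC_iff Lp_const')

lemma dens_pos: "f \<in> D \<Longrightarrow> AE x in M. 0 < f x"
  using proper by (simp add: proper_def)

lemma cond_min_le:
  assumes "is_cond_min M C eps \<rho> \<xi> \<eta>" "\<xi> \<in> Lp M (2 + eps)" "\<zeta> \<in> LC"
  shows "\<rho>\<^sub>D (\<lambda>x. (\<xi> x - \<eta> x)\<^sup>2) \<le> \<rho>\<^sub>D (\<lambda>x. (\<xi> x - \<zeta> x)\<^sup>2)"
proof -
  have "\<rho>\<^sub>D (\<lambda>x. (\<xi> x - \<eta> x)\<^sup>2) = (INF \<zeta>\<in>LC. \<rho>\<^sub>D (\<lambda>x. (\<xi> x - \<zeta> x)\<^sup>2))"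
    using assms(1) by (simp add: is_cond_min_def)
  also have "\<dots> \<le> \<rho>\<^sub>D (\<lambda>x. (\<xi> x - \<zeta> x)\<^sup>2)"
    using assms(2,3) rhoD_nonneg[OF Lp_power2_diff]
    by (intro cINF_lower bdd_belowI2[where m = 0]) (auto simp: LC_iff)
  finally show ?thesis .
qed

lemma cond_minI:
  assumes "\<eta> \<in> LC" "\<And>\<zeta>. \<zeta> \<in> LC \<Longrightarrow> \<rho>\<^sub>D (\<lambda>x. (\<xi> x - \<eta> x)\<^sup>2) \<le> \<rho>\<^sub>D (\<lambda>x. (\<xi> x - \<zeta> x)\<^sup>2)"
  shows "is_cond_min M C eps \<rho> \<xi> \<eta>"
proof -
  have "\<rho>\<^sub>D (\<lambda>x. (\<xi> x - \<eta> x)\<^sup>2) = (INF \<zeta>\<in>LC. \<rho>\<^sub>D (\<lambda>x. (\<xi> x - \<zeta> x)\<^sup>2))"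
    using assms by (intro antisym cINF_greatest cINF_lower bdd_belowI2) auto
  thus ?thesis using assms(1) by (simp add: is_cond_min_def)
qed

text \<open>For the midpoint \<open>m\<close> of two minimisers and a density \<open>f\<close> attaining
  \<open>\<rho>\<^sub>D ((\<xi> - m)\<^sup>2)\<close>, the parallelogram identity forces \<open>E\<^sub>f (\<eta>\<^sub>1 - \<eta>\<^sub>2)\<^sup>2 \<le> 0\<close>, and
  properness turns this into \<open>\<eta>\<^sub>1 = \<eta>\<^sub>2\<close> a.e.\<close>

lemma cond_min_unique:
  assumes \<xi>: "\<xi> \<in> Lp M (2 + eps)"
    and min1: "is_cond_min M C eps \<rho> \<xi> \<eta>1" and min2: "is_cond_min M C eps \<rho> \<xi> \<eta>2"
  shows "AE x in M. \<eta>1 x = \<eta>2 x"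
proof -
  have \<eta>1: "\<eta>1 \<in> LC" and \<eta>2: "\<eta>2 \<in> LC" using min1 min2 by (auto simp: is_cond_min_def)
  define m where "m = (\<lambda>x. (1/2) * (\<eta>1 x + \<eta>2 x))"
  have m: "m \<in> LC" unfolding m_def by (intro LC_cmult LC_add \<eta>1 \<eta>2)
  have sq: "(\<lambda>x. (\<xi> x - \<eta>1 x)\<^sup>2) \<in> Lp M (1 + eps/2)" "(\<lambda>x. (\<xi> x - \<eta>2 x)\<^sup>2) \<in> Lp M (1 + eps/2)"
    "(\<lambda>x. (\<xi> x - m x)\<^sup>2) \<in> Lp M (1 + eps/2)" "(\<lambda>x. (\<eta>1 x - \<eta>2 x)\<^sup>2) \<in> Lp M (1 + eps/2)"
    using \<xi> \<eta>1 \<eta>2 m by (auto simp: LC_iff intro: Lp_power2_diff)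
  obtain f where f: "f \<in> D" and f_max: "E f (\<lambda>x. (\<xi> x - m x)\<^sup>2) = \<rho>\<^sub>D (\<lambda>x. (\<xi> x - m x)\<^sup>2)"
    using rhoD_attained[OF sq(3)] by blast
  let ?I = "\<rho>\<^sub>D (\<lambda>x. (\<xi> x - \<eta>1 x)\<^sup>2)"
  have "\<rho>\<^sub>D (\<lambda>x. (\<xi> x - \<eta>2 x)\<^sup>2) = ?I"
    using cond_min_le[OF min1 \<xi> \<eta>2] cond_min_le[OF min2 \<xi> \<eta>1] by auto
  hence le: "E f (\<lambda>x. (\<xi> x - \<eta>1 x)\<^sup>2) \<le> ?I" "E f (\<lambda>x. (\<xi> x - \<eta>2 x)\<^sup>2) \<le> ?I"
    using rhoD_ge[OF sq(1) f] rhoD_ge[OF sq(2) f] by auto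
  have parallelogram: "f x * (\<xi> x - m x)\<^sup>2 = (1/2) * (f x * (\<xi> x - \<eta>1 x)\<^sup>2)
      + (1/2) * (f x * (\<xi> x - \<eta>2 x)\<^sup>2) - (1/4) * (f x * (\<eta>1 x - \<eta>2 x)\<^sup>2)" for x
    unfolding m_def by (simp add: power2_eq_square algebra_simps)
  have "E f (\<lambda>x. (\<xi> x - m x)\<^sup>2) = (1/2) * E f (\<lambda>x. (\<xi> x - \<eta>1 x)\<^sup>2)
      + (1/2) * E f (\<lambda>x. (\<xi> x - \<eta>2 x)\<^sup>2) - (1/4) * E f (\<lambda>x. (\<eta>1 x - \<eta>2 x)\<^sup>2)"
    unfolding parallelogram using sq f by (simp add: integrable_dens_mult)
  moreover have "?I \<le> E f (\<lambda>x. (\<xi> x - m x)\<^sup>2)" using cond_min_le[OF min1 \<xi> m] f_max by simp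
  ultimately have "E f (\<lambda>x. (\<eta>1 x - \<eta>2 x)\<^sup>2) \<le> 0" using le by simp
  moreover have nonneg: "AE x in M. 0 \<le> f x * (\<eta>1 x - \<eta>2 x)\<^sup>2"
    using densD(2)[OF f] by eventually_elim simp
  ultimately have "AE x in M. f x * (\<eta>1 x - \<eta>2 x)\<^sup>2 = 0"
    using integral_nonneg_eq_0_iff_AE[OF integrable_dens_mult[OF f sq(4)] nonneg]
      integral_nonneg_AE[OF nonneg] by simp
  thus ?thesis using dens_pos[OF f] by eventually_elim simp
qed

definition cond_normalize :: "('a \<Rightarrow> real) \<Rightarrow> 'a \<Rightarrow> real" where
  "cond_normalize f = (\<lambda>x. f x / real_cond_exp M C f x)"

definition cond_normalized :: "('a \<Rightarrow> real) \<Rightarrow> bool" where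
  "cond_normalized h \<longleftrightarrow> h \<in> D \<and> (AE x in M. real_cond_exp M C h x = 1)"

lemma cond_exp_dens_pos: "f \<in> D \<Longrightarrow> AE x in M. 0 < real_cond_exp M C f x"
  using real_cond_exp_gr_c[OF densD(3) dens_pos] by blast

lemma cond_normalize_dens: "f \<in> D \<Longrightarrow> cond_normalize f \<in> D"
  using stable unfolding stable_def cond_normalize_def by auto

lemma dens_eq_cond_exp_mult:
  assumes "f \<in> D"
  shows "AE x in M. f x = real_cond_exp M C f x * cond_normalize f x"
  using cond_exp_dens_pos[OF assms] by eventually_elim (simp add: cond_normalize_def)

lemma cond_normalized_cond_normalize:
  assumes f: "f \<in> D"
  shows "cond_normalized (cond_normalize f)"
proof -
  have eq: "cond_normalize f = (\<lambda>x. (1 / real_cond_exp M C f x) * f x)"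
    by (auto simp: cond_normalize_def)
  have "integrable M (\<lambda>x. (1 / real_cond_exp M C f x) * f x)"
    using densD(3)[OF cond_normalize_dens[OF f]] by (simp add: cond_normalize_def)
  hence "AE x in M. real_cond_exp M C (\<lambda>x. (1 / real_cond_exp M C f x) * f x) x
      = (1 / real_cond_exp M C f x) * real_cond_exp M C f x"
    using f by (intro real_cond_exp_mult) auto
  hence "AE x in M. real_cond_exp M C (cond_normalize f) x = 1"
    using cond_exp_dens_pos[OF f] unfolding eq by eventually_elim simp
  thus ?thesis using cond_normalize_dens[OF f] by (simp add: cond_normalized_def)
qed

lemma cond_normalized_integral:
  assumes h: "cond_normalized h" and g[measurable]: "g \<in> borel_measurable C"
    and int: "integrable M (\<lambda>x. h x * g x)"
  shows "integrable M g" "E h g = integral\<^sup>L M g"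
proof -
  have [measurable]: "h \<in> borel_measurable M" "g \<in> borel_measurable M"
    using h measurable_from_C[OF g] by (auto simp: cond_normalized_def)
  have h1: "AE x in M. g x * real_cond_exp M C h x = g x"
    using h by (auto simp: cond_normalized_def elim!: eventually_mono)
  have "integrable M (\<lambda>x. g x * h x)" using int by (simp add: mult.commute)
  note cond = real_cond_exp_intg[OF this g]
  show "integrable M g" using integrable_cong_AE_imp[OF cond(1) _ h1] by simp
  have "integral\<^sup>L M g = (\<integral>x. g x * real_cond_exp M C h x \<partial>M)"
    using h1 by (intro integral_cong_AE) auto
  thus "E h g = integral\<^sup>L M g" using cond(2) by (simp add: mult.commute)
qed

lemma integrable_dens_abs_powr:
  assumes f: "f \<in> D" and \<xi>: "\<xi> \<in> Lp M (4 + 2*eps)"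
  shows "integrable M (\<lambda>x. f x * \<bar>\<xi> x\<bar> powr (2 + eps))"
proof -
  have "(4 + 2*eps) / (2 + eps) = 2" using eps_pos by (simp add: field_simps)
  hence "(\<lambda>x. \<bar>\<xi> x\<bar> powr (2 + eps)) \<in> Lp M 2" using Lp_abs_powr[OF \<xi>, of "2 + eps"] eps_pos by simp
  hence "(\<lambda>x. \<bar>\<xi> x\<bar> powr (2 + eps)) \<in> Lp M (1 + eps/2)"
    by (rule Lp_lower_exponent[OF finite_measure_axioms]) (use eps_pos eps_less_1 in auto)
  thus ?thesis by (rule integrable_dens_mult[OF f])
qed

text \<open>Truncation argument for the conditional Jensen inequality below: with \<open>Y = E[h \<xi>|C]\<close>
  and \<open>t = min |Y| K\<close>, test the defining property of \<open>Y\<close> against the bounded \<open>C\<close>-measurable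
  \<open>sgn Y t\<^sup>1\<^sup>+\<^sup>\<epsilon>\<close> and apply Young's inequality.\<close>

lemma cond_exp_truncation_bound:
  fixes K :: nat
  assumes h: "cond_normalized h" and \<xi>: "\<xi> \<in> Lp M (4 + 2*eps)"
  defines "t \<equiv> \<lambda>x. min \<bar>real_cond_exp M C (\<lambda>x. h x * \<xi> x) x\<bar> (real K)"
  shows "integrable M (\<lambda>x. t x powr (2 + eps))"
    and "integral\<^sup>L M (\<lambda>x. t x powr (2 + eps)) \<le> E h (\<lambda>x. \<bar>\<xi> x\<bar> powr (2 + eps))"
proof -
  let ?r = "2 + eps" and ?Y = "real_cond_exp M C (\<lambda>x. h x * \<xi> x)"
  have hD: "h \<in> D" using h by (simp add: cond_normalized_def)
  have [measurable]: "h \<in> borel_measurable M" "\<xi> \<in> borel_measurable M"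
    using hD \<xi> Lp_measurable by auto
  have t_C[measurable]: "t \<in> borel_measurable C" unfolding t_def by measurable
  have [measurable]: "t \<in> borel_measurable M" using measurable_from_C[OF t_C] .
  have t_bounds: "0 \<le> t x" "t x \<le> \<bar>?Y x\<bar>" "\<bar>t x powr ?r\<bar> \<le> real K powr ?r" for x
    unfolding t_def using eps_pos by (auto intro: powr_mono2)
  define g where "g = (\<lambda>x. sgn (?Y x) * t x powr (1 + eps))"
  have g_C[measurable]: "g \<in> borel_measurable C" unfolding g_def by measurable
  have [measurable]: "g \<in> borel_measurable M" using measurable_from_C[OF g_C] .
  have g_bound: "\<bar>g x\<bar> \<le> real K powr (1 + eps)" for x
    unfolding g_def t_def using eps_pos by (auto simp: abs_mult sgn_if intro!: powr_mono2)
  have "\<xi> \<in> Lp M (1 + eps/2)"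
    by (rule Lp_lower_exponent[OF finite_measure_axioms \<xi>]) (use eps_pos in auto)
  hence h\<xi>: "integrable M (\<lambda>x. h x * \<xi> x)" by (rule integrable_dens_mult[OF hD])
  have h\<xi>_r: "integrable M (\<lambda>x. h x * \<bar>\<xi> x\<bar> powr ?r)" by (rule integrable_dens_abs_powr[OF hD \<xi>])
  have g_h\<xi>: "integrable M (\<lambda>x. g x * (h x * \<xi> x))"
    by (rule integrable_bounded_mult[OF h\<xi> _ g_bound]) measurable
  have "(\<lambda>x. h x * \<xi> x) \<in> borel_measurable M" by measurable
  note g_Y = real_cond_exp_intg[OF g_h\<xi> g_C this]
  show t_int: "integrable M (\<lambda>x. t x powr ?r)"
    using integrable_bounded_mult[of M "\<lambda>_. 1" "\<lambda>x. t x powr ?r" "real K powr ?r"] t_bounds(3)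
    by simp
  have h_t: "integrable M (\<lambda>x. h x * t x powr ?r)"
    using integrable_bounded_mult[OF densD(3)[OF hD], of "\<lambda>x. t x powr ?r" "real K powr ?r"]
      t_bounds(3) by (simp add: mult.commute)
  have "integral\<^sup>L M (\<lambda>x. t x powr ?r) \<le> (\<integral>x. g x * ?Y x \<partial>M)"
    using t_bounds by (intro integral_mono[OF t_int g_Y(1)]) (auto simp: g_def intro: truncation_le_sgn_mult)
  also have "\<dots> = (\<integral>x. g x * (h x * \<xi> x) \<partial>M)" by (rule g_Y(2))
  also have "\<dots> \<le> (\<integral>x. (1 / ?r) * (h x * \<bar>\<xi> x\<bar> powr ?r) + ((1 + eps) / ?r) * (h x * t x powr ?r) \<partial>M)"
  proof (rule integral_mono_AE[OF g_h\<xi>])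
    show "AE x in M. g x * (h x * \<xi> x)
        \<le> (1 / ?r) * (h x * \<bar>\<xi> x\<bar> powr ?r) + ((1 + eps) / ?r) * (h x * t x powr ?r)"
      using densD(2)[OF hD] unfolding g_def
      by eventually_elim (rule sgn_truncation_Young[OF eps_pos t_bounds(1)])
  qed (use h\<xi>_r h_t in simp)
  also have "\<dots> = (1 / ?r) * E h (\<lambda>x. \<bar>\<xi> x\<bar> powr ?r) + ((1 + eps) / ?r) * integral\<^sup>L M (\<lambda>x. t x powr ?r)"
    using h\<xi>_r h_t cond_normalized_integral(2)[OF h _ h_t] by simp
  also have "(1 + eps) / ?r = 1 - 1 / ?r" using eps_pos by (simp add: field_simps)
  finally have "(1 / ?r) * integral\<^sup>L M (\<lambda>x. t x powr ?r) \<le> (1 / ?r) * E h (\<lambda>x. \<bar>\<xi> x\<bar> powr ?r)"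
    by (simp add: left_diff_distrib)
  thus "integral\<^sup>L M (\<lambda>x. t x powr ?r) \<le> E h (\<lambda>x. \<bar>\<xi> x\<bar> powr ?r)"
    using eps_pos by (simp add: divide_le_cancel)
qed

text \<open>In effect a conditional Jensen inequality under \<open>h P\<^sub>0\<close>: let \<open>K \<rightarrow> \<infinity>\<close> in the truncated bound.\<close>

lemma cond_exp_weighted_Lp:
  assumes h: "cond_normalized h" and \<xi>: "\<xi> \<in> Lp M (4 + 2*eps)"
  shows "real_cond_exp M C (\<lambda>x. h x * \<xi> x) \<in> Lp M (2 + eps)"
proof (rule LpI)
  let ?Y = "real_cond_exp M C (\<lambda>x. h x * \<xi> x)"
  show "integrable M (\<lambda>x. \<bar>?Y x\<bar> powr (2 + eps))"
  proof (rule integrable_incseq_bounded[where g = "\<lambda>K x. min \<bar>?Y x\<bar> (real K) powr (2 + eps)"])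
    show "incseq (\<lambda>K. min \<bar>?Y x\<bar> (real K) powr (2 + eps))" for x
      unfolding incseq_def using eps_pos by (auto intro!: powr_mono2)
    show "(\<lambda>K. min \<bar>?Y x\<bar> (real K) powr (2 + eps)) \<longlonglongrightarrow> \<bar>?Y x\<bar> powr (2 + eps)" for x
    proof (rule tendsto_eventually)
      obtain N :: nat where "\<bar>?Y x\<bar> \<le> real N" using real_arch_simple by blast
      thus "\<forall>\<^sub>F K in sequentially. min \<bar>?Y x\<bar> (real K) powr (2 + eps) = \<bar>?Y x\<bar> powr (2 + eps)"
        unfolding eventually_sequentially by (intro exI[of _ N]) auto
    qed
  qed (use cond_exp_truncation_bound[OF h \<xi>] in auto)
qed measurable

definition cond_mean :: "('a \<Rightarrow> real) \<Rightarrow> ('a \<Rightarrow> real) \<Rightarrow> 'a \<Rightarrow> real" where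
  "cond_mean f \<xi> = real_cond_exp M C (\<lambda>x. cond_normalize f x * \<xi> x)"

lemma cond_mean_LC: "f \<in> D \<Longrightarrow> \<xi> \<in> Lp M (4 + 2*eps) \<Longrightarrow> cond_mean f \<xi> \<in> LC"
  unfolding cond_mean_def LC_iff
  by (auto intro: cond_exp_weighted_Lp cond_normalized_cond_normalize)

lemma integrable_dens_mult_mult:
  assumes f: "f \<in> D" and \<xi>: "\<xi> \<in> Lp M (4 + 2*eps)" and \<zeta>: "\<zeta> \<in> Lp M (2 + eps)"
  shows "integrable M (\<lambda>x. f x * (\<xi> x * \<zeta> x))"
proof -
  have e1: "1 / (4 + 2*eps) + 1 / (2 + eps) = 1 / ((4 + 2*eps) / 3)"
    and e2: "1 / (1 + 2/eps) + 1 / ((4 + 2*eps) / 3) = 1 / ((4 + 2*eps) / (2*eps + 3))"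
    using eps_pos by (simp_all add: divide_simps) (simp add: algebra_simps)
  have "(\<lambda>x. \<xi> x * \<zeta> x) \<in> Lp M ((4 + 2*eps) / 3)"
    by (rule Lp_mult[OF \<xi> \<zeta> _ _ _ e1]) (use eps_pos in auto)
  hence "(\<lambda>x. f x * (\<xi> x * \<zeta> x)) \<in> Lp M ((4 + 2*eps) / (2*eps + 3))"
    by (rule Lp_mult[OF dens_Lp[OF f] _ _ _ _ e2]) (use eps_pos exponents_pos in auto)
  hence "(\<lambda>x. f x * (\<xi> x * \<zeta> x)) \<in> Lp M 1"
    by (rule Lp_lower_exponent[OF finite_measure_axioms]) (use eps_pos in auto)
  thus ?thesis by (simp add: Lp_1_iff_integrable)
qed

text \<open>Write \<open>f = E[f|C] h\<close> with \<open>h\<close> conditionally normalised and move the \<open>C\<close>-measurable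
  factors across the conditional expectation.\<close>

lemma cond_mean_orthogonal:
  assumes f: "f \<in> D" and \<xi>: "\<xi> \<in> Lp M (4 + 2*eps)" and \<zeta>: "\<zeta> \<in> LC"
  shows "integrable M (\<lambda>x. f x * ((\<xi> x - cond_mean f \<xi> x) * \<zeta> x))"
    and "E f (\<lambda>x. (\<xi> x - cond_mean f \<xi> x) * \<zeta> x) = 0"
proof -
  define h c m where "h = cond_normalize f" and "c = real_cond_exp M C f" and "m = cond_mean f \<xi>"
  have h: "cond_normalized h" unfolding h_def by (rule cond_normalized_cond_normalize[OF f])
  have m: "m \<in> LC" unfolding m_def by (rule cond_mean_LC[OF f \<xi>])
  have [measurable]: "f \<in> borel_measurable M" "h \<in> borel_measurable M" "\<xi> \<in> borel_measurable M"
    "c \<in> borel_measurable C" "m \<in> borel_measurable C" "\<zeta> \<in> borel_measurable C"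
    using f h \<xi> m \<zeta> by (auto simp: cond_normalized_def c_def LC_iff intro: Lp_measurable)
  have [measurable]: "c \<in> borel_measurable M" "m \<in> borel_measurable M" "\<zeta> \<in> borel_measurable M"
    by (auto intro: measurable_from_C)
  have f_eq: "AE x in M. f x = c x * h x"
    using dens_eq_cond_exp_mult[OF f] by (simp add: c_def h_def)
  have \<zeta>L: "\<zeta> \<in> Lp M (2 + eps)" and mL: "m \<in> Lp M (2 + eps)" using \<zeta> m by (auto simp: LC_iff)
  have f\<xi>\<zeta>: "integrable M (\<lambda>x. f x * (\<xi> x * \<zeta> x))" by (rule integrable_dens_mult_mult[OF f \<xi> \<zeta>L])
  have "(\<lambda>x. m x * \<zeta> x) \<in> Lp M ((2 + eps) / 2)"
    using eps_pos by (intro Lp_mult[OF mL \<zeta>L]) auto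
  hence fm\<zeta>: "integrable M (\<lambda>x. f x * (m x * \<zeta> x))"
    by (intro integrable_dens_mult[OF f]) (simp add: add_divide_distrib)
  show "integrable M (\<lambda>x. f x * ((\<xi> x - cond_mean f \<xi> x) * \<zeta> x))"
    using Bochner_Integration.integrable_diff[OF f\<xi>\<zeta> fm\<zeta>] by (simp add: m_def algebra_simps)
  have i1: "integrable M (\<lambda>x. (c x * \<zeta> x) * (h x * \<xi> x))"
  proof (rule integrable_cong_AE_imp[OF f\<xi>\<zeta>])
    show "AE x in M. f x * (\<xi> x * \<zeta> x) = c x * \<zeta> x * (h x * \<xi> x)"
      using f_eq by eventually_elim simp
  qed measurable
  have i2: "integrable M (\<lambda>x. h x * (m x * (c x * \<zeta> x)))"
  proof (rule integrable_cong_AE_imp[OF fm\<zeta>])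
    show "AE x in M. f x * (m x * \<zeta> x) = h x * (m x * (c x * \<zeta> x))"
      using f_eq by eventually_elim simp
  qed measurable
  have "E f (\<lambda>x. \<xi> x * \<zeta> x) = (\<integral>x. (c x * \<zeta> x) * (h x * \<xi> x) \<partial>M)"
    using f_eq by (intro integral_cong_AE) (auto simp: mult_ac elim!: eventually_mono)
  also have "\<dots> = (\<integral>x. (c x * \<zeta> x) * m x \<partial>M)"
  proof -
    have "(\<lambda>x. c x * \<zeta> x) \<in> borel_measurable C" "(\<lambda>x. h x * \<xi> x) \<in> borel_measurable M"
      by measurable
    from real_cond_exp_intg(2)[OF i1 this] show ?thesis by (simp add: m_def cond_mean_def h_def)
  qed
  also have "\<dots> = E h (\<lambda>x. m x * (c x * \<zeta> x))"
    using cond_normalized_integral(2)[OF h _ i2] by (simp add: mult_ac)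
  also have "\<dots> = E f (\<lambda>x. m x * \<zeta> x)"
    using f_eq by (intro integral_cong_AE) (auto simp: mult_ac elim!: eventually_mono)
  finally show "E f (\<lambda>x. (\<xi> x - cond_mean f \<xi> x) * \<zeta> x) = 0"
    using f\<xi>\<zeta> fm\<zeta> by (simp add: m_def left_diff_distrib right_diff_distrib)
qed

abbreviation sqdist :: "('a \<Rightarrow> real) \<Rightarrow> ('a \<Rightarrow> real) \<Rightarrow> ('a \<Rightarrow> real) \<Rightarrow> real" where
  "sqdist f \<xi> \<eta> \<equiv> E f (\<lambda>x. (\<xi> x - \<eta> x)\<^sup>2)"

lemma integrable_sqdist:
  "f \<in> D \<Longrightarrow> \<xi> \<in> Lp M (2 + eps) \<Longrightarrow> \<eta> \<in> Lp M (2 + eps) \<Longrightarrow> integrable M (\<lambda>x. f x * (\<xi> x - \<eta> x)\<^sup>2)"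
  by (intro integrable_dens_mult Lp_power2_diff)

lemma sqdist_nonneg: "f \<in> D \<Longrightarrow> 0 \<le> sqdist f \<xi> \<eta>"
  by (rule integral_nonneg_AE) (auto dest!: densD(2) elim!: eventually_mono)

lemma sqdist_pythagoras:
  assumes f: "f \<in> D" and \<xi>: "\<xi> \<in> Lp M (4 + 2*eps)" and \<eta>: "\<eta> \<in> LC"
  shows "sqdist f \<xi> \<eta> = sqdist f \<xi> (cond_mean f \<xi>) + sqdist f (cond_mean f \<xi>) \<eta>"
proof -
  define m where "m = cond_mean f \<xi>"
  have m: "m \<in> LC" unfolding m_def by (rule cond_mean_LC[OF f \<xi>])
  have "(\<lambda>x. m x - \<eta> x) \<in> LC" by (rule LC_diff[OF m \<eta>])
  note cross = cond_mean_orthogonal[OF f \<xi> this, folded m_def]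
  have expand: "f x * (\<xi> x - \<eta> x)\<^sup>2 = f x * (\<xi> x - m x)\<^sup>2 + f x * (m x - \<eta> x)\<^sup>2
      + 2 * (f x * ((\<xi> x - m x) * (m x - \<eta> x)))" for x
    by (simp add: power2_eq_square algebra_simps)
  have "\<xi> \<in> Lp M (2 + eps)" "m \<in> Lp M (2 + eps)" "\<eta> \<in> Lp M (2 + eps)"
    using Lp_of_Lp_double[OF \<xi>] m \<eta> by (auto simp: LC_iff)
  thus ?thesis
    unfolding expand m_def[symmetric] using cross integrable_sqdist[OF f] by simp
qed

lemma sqdist_mix:
  assumes "f \<in> D" "g \<in> D" "\<xi> \<in> Lp M (2 + eps)" "\<eta> \<in> Lp M (2 + eps)"
  shows "sqdist (\<lambda>x. (1 - t) * f x + t * g x) \<xi> \<eta> = (1 - t) * sqdist f \<xi> \<eta> + t * sqdist g \<xi> \<eta>"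
proof -
  have "(\<lambda>x. ((1 - t) * f x + t * g x) * (\<xi> x - \<eta> x)\<^sup>2)
     = (\<lambda>x. (1 - t) * (f x * (\<xi> x - \<eta> x)\<^sup>2) + t * (g x * (\<xi> x - \<eta> x)\<^sup>2))"
    by (auto simp: algebra_simps)
  thus ?thesis using integrable_sqdist assms by simp
qed

definition exp_cond_var :: "('a \<Rightarrow> real) \<Rightarrow> ('a \<Rightarrow> real) \<Rightarrow> real" where
  "exp_cond_var \<xi> f = sqdist f \<xi> (cond_mean f \<xi>)"

lemma exp_cond_var_le:
  "f \<in> D \<Longrightarrow> \<xi> \<in> Lp M (4 + 2*eps) \<Longrightarrow> \<eta> \<in> LC \<Longrightarrow> exp_cond_var \<xi> f \<le> sqdist f \<xi> \<eta>"
  unfolding exp_cond_var_def using sqdist_pythagoras sqdist_nonneg by fastforce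

lemma exp_cond_var_attains_max:
  assumes \<xi>: "\<xi> \<in> Lp M (4 + 2*eps)"
  shows "\<exists>f\<^sub>0\<in>D. \<forall>f\<in>D. exp_cond_var \<xi> f \<le> exp_cond_var \<xi> f\<^sub>0"
proof (rule compactin_attains_max_of_min_continuous[OF dens_weakly_compact dens_nonempty])
  show "continuous_map (weak_top M (1 + 2/eps) (1 + eps/2)) euclideanreal (\<lambda>f. sqdist f \<xi> \<eta>)"
    if "\<eta> \<in> LC" for \<eta>
    using that Lp_of_Lp_double[OF \<xi>]
    by (intro continuous_map_weak_top_expectation Lp_power2_diff) (auto simp: LC_iff)
  show "exp_cond_var \<xi> f \<le> sqdist f \<xi> \<eta>" if "\<eta> \<in> LC" "f \<in> D" for \<eta> f
    using exp_cond_var_le[OF that(2) \<xi> that(1)] .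
  show "\<exists>\<eta>\<in>LC. sqdist f \<xi> \<eta> = exp_cond_var \<xi> f" if "f \<in> D" for f
    using cond_mean_LC[OF that \<xi>] by (auto simp: exp_cond_var_def)
qed

text \<open>Fix a maximiser \<open>f\<^sub>0\<close> of \<open>exp_cond_var \<xi>\<close>. Moving \<open>f\<^sub>0\<close> a step \<open>t = 2\<^sup>-\<^sup>k\<^sup>-\<^sup>1\<close> towards
  \<open>f\<close> and taking the conditional mean \<open>\<eta>\<close> of the mixture, maximality of \<open>f\<^sub>0\<close> bounds both
  the distance of \<open>\<eta>\<close> to \<open>cond_mean f\<^sub>0 \<xi>\<close> and the error of \<open>\<eta>\<close> under \<open>f\<close>.\<close>

lemma mixture_cond_mean_bounds:
  assumes \<xi>: "\<xi> \<in> Lp M (4 + 2*eps)" and f\<^sub>0: "f\<^sub>0 \<in> D"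
    and max: "\<forall>g\<in>D. exp_cond_var \<xi> g \<le> exp_cond_var \<xi> f\<^sub>0" and f: "f \<in> D"
  shows "\<exists>\<eta>\<in>LC. sqdist f\<^sub>0 (cond_mean f\<^sub>0 \<xi>) \<eta> \<le> exp_cond_var \<xi> f\<^sub>0 * (1/2)^k
    \<and> sqdist f \<xi> \<eta> \<le> exp_cond_var \<xi> f\<^sub>0"
proof -
  define t :: real where "t = (1/2)^(Suc k)"
  have t: "0 < t" "t \<le> 1/2" unfolding t_def by (auto simp: power_le_one)
  define f\<^sub>t where "f\<^sub>t = (\<lambda>x. (1 - t) * f\<^sub>0 x + t * f x)"
  have f\<^sub>t: "f\<^sub>t \<in> D" unfolding f\<^sub>t_def using t by (intro dens_convex[OF f\<^sub>0 f]) auto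
  define \<eta> where "\<eta> = cond_mean f\<^sub>t \<xi>"
  have \<eta>: "\<eta> \<in> LC" unfolding \<eta>_def by (rule cond_mean_LC[OF f\<^sub>t \<xi>])
  define s e P where "s = exp_cond_var \<xi> f\<^sub>0" and "e = sqdist f\<^sub>0 (cond_mean f\<^sub>0 \<xi>) \<eta>"
    and "P = sqdist f \<xi> \<eta>"
  have "e \<ge> 0" "P \<ge> 0" unfolding e_def P_def using f\<^sub>0 f by (auto intro: sqdist_nonneg)
  have "exp_cond_var \<xi> f\<^sub>t = sqdist f\<^sub>t \<xi> \<eta>" by (simp add: exp_cond_var_def \<eta>_def)
  also have "\<dots> = (1 - t) * sqdist f\<^sub>0 \<xi> \<eta> + t * P"
    unfolding f\<^sub>t_def P_def
    using \<eta> Lp_of_Lp_double[OF \<xi>] by (intro sqdist_mix[OF f\<^sub>0 f]) (auto simp: LC_iff)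
  also have "sqdist f\<^sub>0 \<xi> \<eta> = s + e"
    unfolding s_def e_def exp_cond_var_def by (rule sqdist_pythagoras[OF f\<^sub>0 \<xi> \<eta>])
  finally have "(1 - t) * (s + e) + t * P \<le> s" using max f\<^sub>t unfolding s_def by metis
  hence ineq: "(1 - t) * e + t * P \<le> t * s" by (simp add: algebra_simps)
  have "(1/2) * e \<le> (1 - t) * e" using t \<open>e \<ge> 0\<close> by (intro mult_right_mono) auto
  moreover have "0 \<le> t * P" using t \<open>P \<ge> 0\<close> by simp
  ultimately have "e \<le> (2 * t) * s" using ineq by linarith
  moreover have "0 \<le> (1 - t) * e" using t \<open>e \<ge> 0\<close> by simp
  hence "t * P \<le> t * s" using ineq by linarith
  ultimately have "e \<le> s * (1/2)^k" "P \<le> s" using t by (auto simp: t_def mult.commute)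
  thus ?thesis using \<eta> unfolding e_def P_def s_def by blast
qed

text \<open>Properness turns convergence in \<open>L\<^sup>2(f P\<^sub>0)\<close> into \<open>P\<^sub>0\<close>-a.s. convergence.\<close>

lemma AE_tendsto_if_sqdist_geometric:
  assumes f: "f \<in> D" and m: "m \<in> Lp M (2 + eps)" and \<eta>: "\<And>k. \<eta> k \<in> Lp M (2 + eps)"
    and small: "\<And>k. sqdist f m (\<eta> k) \<le> s * (1/2)^k"
  shows "AE x in M. (\<lambda>k. \<eta> k x) \<longlonglongrightarrow> m x"
proof -
  have [measurable]: "m \<in> borel_measurable M" "\<eta> k \<in> borel_measurable M" "f \<in> borel_measurable M" for k
    using m \<eta> f by (auto intro: Lp_measurable)
  have "AE x in M. (\<lambda>k. f x * (m x - \<eta> k x)\<^sup>2) \<longlonglongrightarrow> 0"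
  proof (rule AE_tendsto_zero_if_integrals_geometric)
    show "integrable M (\<lambda>x. f x * (m x - \<eta> k x)\<^sup>2)" for k
      by (rule integrable_sqdist[OF f m \<eta>])
    show "AE x in M. 0 \<le> f x * (m x - \<eta> k x)\<^sup>2" for k
      using densD(2)[OF f] by eventually_elim simp
  qed (use small in auto)
  thus ?thesis using dens_pos[OF f]
  proof eventually_elim
    case (elim x)
    hence "(\<lambda>k. (m x - \<eta> k x)\<^sup>2) \<longlonglongrightarrow> 0"
      using tendsto_mult_left[OF elim(1), of "1 / f x"] by simp
    hence "(\<lambda>k. m x - \<eta> k x) \<longlonglongrightarrow> 0"
      using tendsto_real_sqrt by (fastforce simp: tendsto_rabs_zero_iff)
    from tendsto_diff[OF tendsto_const[of "m x"] this] show ?case by simp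
  qed
qed

lemma sqdist_le_if_AE_tendsto:
  assumes f: "f \<in> D" and \<xi>: "\<xi> \<in> Lp M (2 + eps)" and m: "m \<in> Lp M (2 + eps)"
    and \<eta>: "\<And>k. \<eta> k \<in> Lp M (2 + eps)" and lim: "AE x in M. (\<lambda>k. \<eta> k x) \<longlonglongrightarrow> m x"
    and bound: "\<And>k. sqdist f \<xi> (\<eta> k) \<le> s"
  shows "sqdist f \<xi> m \<le> s"
proof -
  have [measurable]: "\<xi> \<in> borel_measurable M" "\<eta> k \<in> borel_measurable M" "f \<in> borel_measurable M" for k
    using \<xi> \<eta> f by (auto intro: Lp_measurable)
  define u where "u = (\<lambda>k x. ennreal (f x * (\<xi> x - \<eta> k x)\<^sup>2))"
  have liminf_u: "AE x in M. liminf (\<lambda>k. u k x) = ennreal (f x * (\<xi> x - m x)\<^sup>2)"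
    using lim by eventually_elim (auto simp: u_def intro!: lim_imp_Liminf tendsto_intros)
  have nonneg: "AE x in M. 0 \<le> f x * (\<xi> x - \<eta>' x)\<^sup>2" for \<eta>'
    using densD(2)[OF f] by eventually_elim simp
  have "ennreal (sqdist f \<xi> m) = (\<integral>\<^sup>+ x. ennreal (f x * (\<xi> x - m x)\<^sup>2) \<partial>M)"
    by (intro nn_integral_eq_integral[symmetric] integrable_sqdist[OF f \<xi> m] nonneg)
  also have "\<dots> = (\<integral>\<^sup>+ x. liminf (\<lambda>k. u k x) \<partial>M)"
    using liminf_u by (intro nn_integral_cong_AE) (auto elim!: eventually_mono)
  also have "\<dots> \<le> liminf (\<lambda>k. integral\<^sup>N M (u k))" by (rule nn_integral_liminf) (simp add: u_def)
  also have "\<dots> \<le> ennreal s"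
  proof (rule Liminf_le)
    have "integral\<^sup>N M (u k) = ennreal (sqdist f \<xi> (\<eta> k))" for k
      unfolding u_def by (intro nn_integral_eq_integral integrable_sqdist[OF f \<xi> \<eta>] nonneg)
    thus "\<forall>\<^sub>F k in sequentially. integral\<^sup>N M (u k) \<le> ennreal s"
      using bound by (simp add: ennreal_leI)
  qed simp
  finally have "ennreal (sqdist f \<xi> m) \<le> ennreal s" .
  moreover have "0 \<le> s" using bound[of 0] sqdist_nonneg[OF f, of \<xi> "\<eta> 0"] by linarith
  ultimately show ?thesis by simp
qed

lemma sqdist_le_max_exp_cond_var:
  assumes \<xi>: "\<xi> \<in> Lp M (4 + 2*eps)" and f\<^sub>0: "f\<^sub>0 \<in> D"
    and max: "\<forall>g\<in>D. exp_cond_var \<xi> g \<le> exp_cond_var \<xi> f\<^sub>0" and f: "f \<in> D"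
  shows "sqdist f \<xi> (cond_mean f\<^sub>0 \<xi>) \<le> exp_cond_var \<xi> f\<^sub>0"
proof -
  define s m where "s = exp_cond_var \<xi> f\<^sub>0" and "m = cond_mean f\<^sub>0 \<xi>"
  have m: "m \<in> Lp M (2 + eps)" using cond_mean_LC[OF f\<^sub>0 \<xi>] by (simp add: m_def LC_iff)
  have "\<forall>k. \<exists>\<eta>. \<eta> \<in> LC \<and> sqdist f\<^sub>0 m \<eta> \<le> s * (1/2)^k \<and> sqdist f \<xi> \<eta> \<le> s"
    using mixture_cond_mean_bounds[OF \<xi> f\<^sub>0 max f] unfolding s_def m_def by blast
  then obtain \<eta> where "\<forall>k. \<eta> k \<in> LC \<and> sqdist f\<^sub>0 m (\<eta> k) \<le> s * (1/2)^k \<and> sqdist f \<xi> (\<eta> k) \<le> s"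
    by (auto dest!: choice)
  hence \<eta>: "\<And>k. \<eta> k \<in> Lp M (2 + eps)" "\<And>k. sqdist f\<^sub>0 m (\<eta> k) \<le> s * (1/2)^k"
    "\<And>k. sqdist f \<xi> (\<eta> k) \<le> s" by (auto simp: LC_iff)
  have "AE x in M. (\<lambda>k. \<eta> k x) \<longlonglongrightarrow> m x"
    by (rule AE_tendsto_if_sqdist_geometric[OF f\<^sub>0 m \<eta>(1,2)])
  from sqdist_le_if_AE_tendsto[OF f Lp_of_Lp_double[OF \<xi>] m \<eta>(1) this \<eta>(3)]
  show ?thesis by (simp add: s_def m_def)
qed

lemma cond_min_exists:
  assumes \<xi>: "\<xi> \<in> Lp M (4 + 2*eps)"
  shows "\<exists>\<eta>. is_cond_min M C eps \<rho> \<xi> \<eta>"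
proof -
  obtain f\<^sub>0 where f\<^sub>0: "f\<^sub>0 \<in> D" and max: "\<forall>g\<in>D. exp_cond_var \<xi> g \<le> exp_cond_var \<xi> f\<^sub>0"
    using exp_cond_var_attains_max[OF \<xi>] by blast
  have "is_cond_min M C eps \<rho> \<xi> (cond_mean f\<^sub>0 \<xi>)"
  proof (rule cond_minI[OF cond_mean_LC[OF f\<^sub>0 \<xi>]])
    fix \<zeta> assume \<zeta>: "\<zeta> \<in> LC"
    have "\<rho>\<^sub>D (\<lambda>x. (\<xi> x - cond_mean f\<^sub>0 \<xi> x)\<^sup>2) \<le> exp_cond_var \<xi> f\<^sub>0"
      by (rule rhoD_least) (rule sqdist_le_max_exp_cond_var[OF \<xi> f\<^sub>0 max])
    also have "\<dots> \<le> sqdist f\<^sub>0 \<xi> \<zeta>" by (rule exp_cond_var_le[OF f\<^sub>0 \<xi> \<zeta>])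
    also have "\<dots> \<le> \<rho>\<^sub>D (\<lambda>x. (\<xi> x - \<zeta> x)\<^sup>2)"
      using \<zeta> Lp_of_Lp_double[OF \<xi>] f\<^sub>0 by (intro rhoD_ge Lp_power2_diff) (auto simp: LC_iff)
    finally show "\<rho>\<^sub>D (\<lambda>x. (\<xi> x - cond_mean f\<^sub>0 \<xi> x)\<^sup>2) \<le> \<rho>\<^sub>D (\<lambda>x. (\<xi> x - \<zeta> x)\<^sup>2)" .
  qed
  thus ?thesis by blast
qed

lemma dens_meas_prob_space: "f \<in> D \<Longrightarrow> prob_space (dens_meas M f)"
  unfolding dens_meas_def using densD(1-4)
  by (intro prob_spaceI) (simp add: emeasure_density nn_integral_eq_integral)

lemma indep_dens_integral_mult:
  fixes g :: "real \<Rightarrow> real"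
  assumes f: "f \<in> D"
    and ind: "prob_space.indep_set (dens_meas M f) {\<xi> -` A \<inter> space M | A. A \<in> sets borel} (sets C)"
    and \<xi>[measurable]: "\<xi> \<in> borel_measurable M" and g[measurable]: "g \<in> borel_measurable borel"
    and Y[measurable]: "Y \<in> borel_measurable C"
    and int: "integrable M (\<lambda>x. f x * g (\<xi> x))" "integrable M (\<lambda>x. f x * Y x)"
  shows "E f (\<lambda>x. g (\<xi> x) * Y x) = E f (\<lambda>x. g (\<xi> x)) * E f Y"
proof -
  interpret P: prob_space "dens_meas M f" by (rule dens_meas_prob_space[OF f])
  have [measurable]: "f \<in> borel_measurable M" "Y \<in> borel_measurable M"
    using f measurable_from_C[OF Y] by auto
  have nonneg: "AE x in M. 0 \<le> f x" by (rule densD(2)[OF f])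
  have dens_integral: "integral\<^sup>L (dens_meas M f) X = E f X" if "X \<in> borel_measurable M" for X
    unfolding dens_meas_def using that nonneg by (subst integral_density) auto
  have dens_integrable: "integrable (dens_meas M f) X" if "integrable M (\<lambda>x. f x * X x)"
    "X \<in> borel_measurable M" for X
    unfolding dens_meas_def using that nonneg by (subst integrable_density) auto
  have sp: "space (dens_meas M f) = space M" and "sets (dens_meas M f) = sets M"
    by (simp_all add: dens_meas_def)
  hence "subalgebra (dens_meas M f) C" "\<xi> \<in> borel_measurable (dens_meas M f)"
    using subalg by (auto simp: subalgebra_def cong: measurable_cong_sets)
  note indep = P.indep_set_vimage_integral_mult[OF _ this, of g Y, unfolded sp]
  show ?thesis using indep[OF ind] int by (simp add: dens_integral dens_integrable)
qed

abbreviation \<rho>\<^sub>C :: "('a \<Rightarrow> real) \<Rightarrow> 'a \<Rightarrow> real" where "\<rho>\<^sub>C \<equiv> cond_rho M C eps \<rho>"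

lemma cond_rho_is_cond_min: "\<xi> \<in> Lp M (4 + 2*eps) \<Longrightarrow> is_cond_min M C eps \<rho> \<xi> (\<rho>\<^sub>C \<xi>)"
  unfolding cond_rho_def by (rule someI_ex[OF cond_min_exists])

lemma cond_rho_LC: "\<xi> \<in> Lp M (4 + 2*eps) \<Longrightarrow> \<rho>\<^sub>C \<xi> \<in> LC"
  using cond_rho_is_cond_min by (auto simp: is_cond_min_def)

lemma cond_rho_unique:
  "\<xi> \<in> Lp M (4 + 2*eps) \<Longrightarrow> is_cond_min M C eps \<rho> \<xi> \<eta> \<Longrightarrow> AE x in M. \<eta> x = \<rho>\<^sub>C \<xi> x"
  by (rule cond_min_unique[OF Lp_of_Lp_double _ cond_rho_is_cond_min])

lemma cond_rho_bounds:
  assumes \<xi>: "\<xi> \<in> Lp M (4 + 2*eps)" and bounds: "AE x in M. C1 \<le> \<xi> x \<and> \<xi> x \<le> C2"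
  shows "AE x in M. C1 \<le> \<rho>\<^sub>C \<xi> x \<and> \<rho>\<^sub>C \<xi> x \<le> C2"
proof -
  define e e' where "e = \<rho>\<^sub>C \<xi>" and "e' = (\<lambda>x. max C1 (min C2 (e x)))"
  have e: "e \<in> LC" unfolding e_def by (rule cond_rho_LC[OF \<xi>])
  hence [measurable]: "e \<in> borel_measurable C" by (simp add: LC_iff)
  have "e' \<in> borel_measurable C" unfolding e'_def by measurable
  moreover have "e' \<in> Lp M (2 + eps)"
    unfolding e'_def using eps_pos measurable_from_C[OF calculation]
    by (intro Lp_dominated[OF Lp_const', of _ "\<bar>C1\<bar> + \<bar>C2\<bar>"]) (auto simp: e'_def)
  ultimately have e': "e' \<in> LC" by (simp add: LC_iff)
  have closer: "\<rho>\<^sub>D (\<lambda>x. (\<xi> x - e' x)\<^sup>2) \<le> \<rho>\<^sub>D (\<lambda>x. (\<xi> x - e x)\<^sup>2)"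
  proof (rule rhoD_mono)
    show "AE x in M. (\<xi> x - e' x)\<^sup>2 \<le> (\<xi> x - e x)\<^sup>2"
      using bounds by eventually_elim (auto simp: e'_def abs_le_square_iff[symmetric] max_def min_def)
  qed (use Lp_of_Lp_double[OF \<xi>] e e' in \<open>auto simp: LC_iff intro: Lp_power2_diff\<close>)
  have "is_cond_min M C eps \<rho> \<xi> e'"
    using cond_min_le[OF cond_rho_is_cond_min[OF \<xi>] Lp_of_Lp_double[OF \<xi>]] closer
    by (intro cond_minI[OF e']) (auto simp: e_def intro: order_trans)
  hence "AE x in M. e' x = e x" using cond_rho_unique[OF \<xi>] unfolding e_def by blast
  thus ?thesis using bounds unfolding e_def[symmetric]
    by eventually_elim (auto simp: e'_def max_def min_def split: if_splits)
qed

lemma cond_rho_cmult: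
  assumes \<xi>: "\<xi> \<in> Lp M (4 + 2*eps)"
  shows "AE x in M. \<rho>\<^sub>C (\<lambda>y. l * \<xi> y) x = l * \<rho>\<^sub>C \<xi> x"
proof -
  define e where "e = \<rho>\<^sub>C \<xi>"
  have e: "e \<in> LC" unfolding e_def by (rule cond_rho_LC[OF \<xi>])
  have "is_cond_min M C eps \<rho> (\<lambda>y. l * \<xi> y) (\<lambda>y. l * e y)"
  proof (cases "l = 0")
    case True
    have "\<rho>\<^sub>D (\<lambda>x. 0) \<le> \<rho>\<^sub>D (\<lambda>x. (0 - \<zeta> x)\<^sup>2)" if "\<zeta> \<in> LC" for \<zeta>
      using that by (intro rhoD_mono Lp_const' Lp_power2_diff) (auto simp: LC_iff)
    thus ?thesis unfolding True by (intro cond_minI) (auto intro: LC_const)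
  next
    case False
    hence l2: "0 < l\<^sup>2" by simp
    show ?thesis
    proof (rule cond_minI[OF LC_cmult[OF e]])
      fix \<zeta> assume \<zeta>: "\<zeta> \<in> LC"
      have \<zeta>': "(\<lambda>x. (1/l) * \<zeta> x) \<in> LC" by (rule LC_cmult[OF \<zeta>])
      have "(\<lambda>x. (l * \<xi> x - l * e x)\<^sup>2) = (\<lambda>x. l\<^sup>2 * (\<xi> x - e x)\<^sup>2)"
        and "(\<lambda>x. (l * \<xi> x - \<zeta> x)\<^sup>2) = (\<lambda>x. l\<^sup>2 * (\<xi> x - (1/l) * \<zeta> x)\<^sup>2)"
        using False by (auto simp: power2_eq_square field_simps)
      moreover have "\<rho>\<^sub>D (\<lambda>x. (\<xi> x - e x)\<^sup>2) \<le> \<rho>\<^sub>D (\<lambda>x. (\<xi> x - (1/l) * \<zeta> x)\<^sup>2)"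
        using cond_min_le[OF cond_rho_is_cond_min[OF \<xi>] Lp_of_Lp_double[OF \<xi>] \<zeta>'] by (simp add: e_def)
      ultimately show "\<rho>\<^sub>D (\<lambda>x. (l * \<xi> x - l * e x)\<^sup>2) \<le> \<rho>\<^sub>D (\<lambda>x. (l * \<xi> x - \<zeta> x)\<^sup>2)"
        using e \<zeta>' Lp_of_Lp_double[OF \<xi>] l2
        by (simp add: rhoD_cmult Lp_power2_diff LC_iff)
    qed
  qed
  hence "AE x in M. l * e x = \<rho>\<^sub>C (\<lambda>y. l * \<xi> y) x" by (rule cond_rho_unique[OF Lp_cmult[OF \<xi>]])
  thus ?thesis unfolding e_def by (auto elim!: eventually_mono)
qed

lemma cond_rho_add_LC:
  assumes \<xi>: "\<xi> \<in> Lp M (4 + 2*eps)" and \<eta>\<^sub>0: "\<eta>\<^sub>0 \<in> LC"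
  shows "is_cond_min M C eps \<rho> (\<lambda>y. \<xi> y + \<eta>\<^sub>0 y) (\<lambda>y. \<rho>\<^sub>C \<xi> y + \<eta>\<^sub>0 y)"
    and "is_cond_min M C eps \<rho> (\<lambda>y. \<xi> y + \<eta>\<^sub>0 y) \<eta> \<Longrightarrow> AE x in M. \<eta> x = \<rho>\<^sub>C \<xi> x + \<eta>\<^sub>0 x"
    and "AE x in M. \<rho>\<^sub>C (\<lambda>y. \<xi> y + \<eta>\<^sub>0 y) x = \<rho>\<^sub>C \<xi> x + \<eta>\<^sub>0 x"
proof -
  show min: "is_cond_min M C eps \<rho> (\<lambda>y. \<xi> y + \<eta>\<^sub>0 y) (\<lambda>y. \<rho>\<^sub>C \<xi> y + \<eta>\<^sub>0 y)"
  proof (rule cond_minI[OF LC_add[OF cond_rho_LC[OF \<xi>] \<eta>\<^sub>0]])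
    fix \<zeta> assume \<zeta>: "\<zeta> \<in> LC"
    have "(\<lambda>x. (\<xi> x + \<eta>\<^sub>0 x - \<zeta> x)\<^sup>2) = (\<lambda>x. (\<xi> x - (\<zeta> x - \<eta>\<^sub>0 x))\<^sup>2)" by (simp add: algebra_simps)
    thus "\<rho>\<^sub>D (\<lambda>x. (\<xi> x + \<eta>\<^sub>0 x - (\<rho>\<^sub>C \<xi> x + \<eta>\<^sub>0 x))\<^sup>2) \<le> \<rho>\<^sub>D (\<lambda>x. (\<xi> x + \<eta>\<^sub>0 x - \<zeta> x)\<^sup>2)"
      using cond_min_le[OF cond_rho_is_cond_min[OF \<xi>] Lp_of_Lp_double[OF \<xi>] LC_diff[OF \<zeta> \<eta>\<^sub>0]] by simp
  qed
  have "(\<lambda>y. \<xi> y + \<eta>\<^sub>0 y) \<in> Lp M (2 + eps)" using Lp_of_Lp_double[OF \<xi>] \<eta>\<^sub>0 by (auto simp: LC_iff intro: Lp_add')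
  note unique = cond_min_unique[OF this _ min]
  show "is_cond_min M C eps \<rho> (\<lambda>y. \<xi> y + \<eta>\<^sub>0 y) \<eta> \<Longrightarrow> AE x in M. \<eta> x = \<rho>\<^sub>C \<xi> x + \<eta>\<^sub>0 x"
    by (rule unique)
  have "is_cond_min M C eps \<rho> (\<lambda>y. \<xi> y + \<eta>\<^sub>0 y) (\<rho>\<^sub>C (\<lambda>y. \<xi> y + \<eta>\<^sub>0 y))"
    unfolding cond_rho_def by (rule someI[where P = "is_cond_min M C eps \<rho> (\<lambda>y. \<xi> y + \<eta>\<^sub>0 y)", OF min])
  thus "AE x in M. \<rho>\<^sub>C (\<lambda>y. \<xi> y + \<eta>\<^sub>0 y) x = \<rho>\<^sub>C \<xi> x + \<eta>\<^sub>0 x" by (rule unique)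
qed

definition indep_of_C :: "('a \<Rightarrow> real) \<Rightarrow> bool" where
  "indep_of_C \<xi> \<longleftrightarrow>
     (\<forall>f\<in>D. prob_space.indep_set (dens_meas M f) {\<xi> -` A \<inter> space M | A. A \<in> sets borel} (sets C))"

lemma sqdist_const_dens: "f \<in> D \<Longrightarrow> sqdist f (\<lambda>_. a) (\<lambda>_. b) = (a - b)\<^sup>2"
  using densD(4) by simp

context
  fixes \<xi> assumes \<xi>: "\<xi> \<in> Lp M (4 + 2*eps)" and indep: "indep_of_C \<xi>"
begin

lemma indep_integral_mult:
  fixes g :: "real \<Rightarrow> real"
  assumes "f \<in> D" "g \<in> borel_measurable borel" "Y \<in> borel_measurable C"
    "integrable M (\<lambda>x. f x * g (\<xi> x))" "integrable M (\<lambda>x. f x * Y x)"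
  shows "E f (\<lambda>x. g (\<xi> x) * Y x) = E f (\<lambda>x. g (\<xi> x)) * E f Y"
  using indep assms Lp_measurable[OF \<xi>] by (intro indep_dens_integral_mult) (auto simp: indep_of_C_def)

text \<open>Under independence, renormalising \<open>f\<close> by the \<open>C\<close>-measurable factor \<open>1 / E[f|C]\<close> does
  not change the distribution of \<open>\<xi>\<close>.\<close>

lemma indep_sqdist_cond_normalize:
  assumes f: "f \<in> D"
  shows "sqdist f \<xi> (\<lambda>_. c) = sqdist (cond_normalize f) \<xi> (\<lambda>_. c)"
proof -
  have int1: "integrable M (\<lambda>x. f x * (\<xi> x - c)\<^sup>2)"
    using integrable_sqdist[OF f Lp_of_Lp_double[OF \<xi>] Lp_const'] .
  have int2: "integrable M (\<lambda>x. f x * (1 / real_cond_exp M C f x))"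
    using densD(3)[OF cond_normalize_dens[OF f]] by (simp add: cond_normalize_def)
  have "E f (\<lambda>x. (\<xi> x - c)\<^sup>2 * (1 / real_cond_exp M C f x))
      = sqdist f \<xi> (\<lambda>_. c) * E f (\<lambda>x. 1 / real_cond_exp M C f x)"
    using int1 int2 by (intro indep_integral_mult[OF f, where g = "\<lambda>y. (y - c)\<^sup>2"]) auto
  moreover have "E f (\<lambda>x. 1 / real_cond_exp M C f x) = 1"
    using densD(4)[OF cond_normalize_dens[OF f]] by (simp add: cond_normalize_def)
  ultimately show ?thesis by (simp add: cond_normalize_def)
qed

lemma indep_sqdist_split:
  assumes h: "h \<in> D" and \<zeta>: "\<zeta> \<in> LC"
  defines "m \<equiv> E h \<xi>"
  shows "sqdist h \<xi> \<zeta> = sqdist h \<xi> (\<lambda>_. m) + sqdist h (\<lambda>_. m) \<zeta>"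
proof -
  have \<xi>L: "\<xi> \<in> Lp M (2 + eps)" using Lp_of_Lp_double[OF \<xi>] .
  have \<zeta>L: "\<zeta> \<in> Lp M (2 + eps)" and [measurable]: "\<zeta> \<in> borel_measurable C" using \<zeta> by (auto simp: LC_iff)
  have lower: "integrable M (\<lambda>x. h x * X x)" if "X \<in> Lp M (2 + eps)" for X
    by (rule integrable_dens_mult[OF h Lp_lower_exponent[OF finite_measure_axioms that]])
      (use eps_pos in auto)
  have int_\<xi>m: "integrable M (\<lambda>x. h x * (\<xi> x - m))" and int_m\<zeta>: "integrable M (\<lambda>x. h x * (m - \<zeta> x))"
    using lower[OF Lp_diff'[OF \<xi>L Lp_const']] lower[OF Lp_diff'[OF Lp_const' \<zeta>L]] by auto
  have "E h (\<lambda>x. \<xi> x - m) = m - m * integral\<^sup>L M h"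
    using lower[OF \<xi>L] densD(3)[OF h] by (simp add: m_def right_diff_distrib)
  hence centered: "E h (\<lambda>x. \<xi> x - m) = 0" using densD(4)[OF h] by simp
  have "E h (\<lambda>x. (\<xi> x - m) * (m - \<zeta> x)) = E h (\<lambda>x. \<xi> x - m) * E h (\<lambda>x. m - \<zeta> x)"
    using int_\<xi>m int_m\<zeta> by (intro indep_integral_mult[OF h, where g = "\<lambda>y. y - m"]) auto
  hence cross: "E h (\<lambda>x. (\<xi> x - m) * (m - \<zeta> x)) = 0" using centered by simp
  have expand: "h x * (\<xi> x - \<zeta> x)\<^sup>2 = h x * (\<xi> x - m)\<^sup>2 + h x * (m - \<zeta> x)\<^sup>2
      + 2 * (h x * ((\<xi> x - m) * (m - \<zeta> x)))" for x
    by (simp add: power2_eq_square algebra_simps)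
  have int_cross: "integrable M (\<lambda>x. h x * ((\<xi> x - m) * (m - \<zeta> x)))"
  proof -
    have "(\<lambda>x. h x * ((\<xi> x - m) * (m - \<zeta> x)))
      = (\<lambda>x. (h x * (\<xi> x - \<zeta> x)\<^sup>2 - h x * (\<xi> x - m)\<^sup>2 - h x * (m - \<zeta> x)\<^sup>2) / 2)"
      by (auto simp: expand)
    thus ?thesis using integrable_sqdist[OF h] \<xi>L \<zeta>L Lp_const' by simp
  qed
  show ?thesis
    unfolding expand using integrable_sqdist[OF h] \<xi>L \<zeta>L Lp_const' int_cross cross by simp
qed

end

text \<open>Jensen's inequality for \<open>\<zeta>\<close>, which has the same law under \<open>P\<^sub>0\<close> and under \<open>h P\<^sub>0\<close>.\<close>

lemma cond_normalized_sqdist_const_ge: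
  assumes h: "cond_normalized h" and \<zeta>: "\<zeta> \<in> LC"
  shows "(m - integral\<^sup>L M \<zeta>)\<^sup>2 \<le> sqdist h (\<lambda>_. m) \<zeta>"
proof -
  define c where "c = integral\<^sup>L M \<zeta>"
  have \<zeta>L: "\<zeta> \<in> Lp M (2 + eps)" and [measurable]: "\<zeta> \<in> borel_measurable C" using \<zeta> by (auto simp: LC_iff)
  have hD: "h \<in> D" using h by (simp add: cond_normalized_def)
  have int_sq: "integrable M (\<lambda>x. (a - \<zeta> x)\<^sup>2)" for a
    using Lp_power2_diff[OF Lp_const' \<zeta>L, of a] eps_pos
      Lp_lower_exponent[OF finite_measure_axioms, of _ "1 + eps/2" 1]
    by (simp add: Lp_1_iff_integrable)
  have int_\<zeta>: "integrable M \<zeta>"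
    using Lp_lower_exponent[OF finite_measure_axioms \<zeta>L, of 1] eps_pos by (simp add: Lp_1_iff_integrable)
  have "sqdist h (\<lambda>_. m) \<zeta> = integral\<^sup>L M (\<lambda>x. (m - \<zeta> x)\<^sup>2)"
    using Lp_const' \<zeta>L by (intro cond_normalized_integral(2)[OF h] integrable_sqdist[OF hD]) auto
  also have "\<dots> = (m - c)\<^sup>2 + integral\<^sup>L M (\<lambda>x. (c - \<zeta> x)\<^sup>2)"
  proof -
    have "(m - \<zeta> x)\<^sup>2 = (m - c)\<^sup>2 + (2 * (m - c)) * c - (2 * (m - c)) * \<zeta> x + (c - \<zeta> x)\<^sup>2" for x
      by (simp add: power2_eq_square algebra_simps)
    thus ?thesis using int_\<zeta> int_sq by (simp add: prob_space c_def)
  qed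
  finally show ?thesis unfolding c_def by simp
qed

lemma cond_rho_const_if_indep:
  assumes \<xi>: "\<xi> \<in> Lp M (4 + 2*eps)" and indep: "indep_of_C \<xi>"
  shows "\<exists>c. AE x in M. \<rho>\<^sub>C \<xi> x = c"
proof -
  define e c where "e = \<rho>\<^sub>C \<xi>" and "c = integral\<^sup>L M e"
  have e: "e \<in> LC" unfolding e_def by (rule cond_rho_LC[OF \<xi>])
  have "sqdist f \<xi> (\<lambda>_. c) \<le> \<rho>\<^sub>D (\<lambda>x. (\<xi> x - e x)\<^sup>2)" if f: "f \<in> D" for f
  proof -
    define h m where "h = cond_normalize f" and "m = E h \<xi>"
    have h: "cond_normalized h" "h \<in> D"
      unfolding h_def using cond_normalized_cond_normalize[OF f] cond_normalize_dens[OF f] by auto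
    have "sqdist f \<xi> (\<lambda>_. c) = sqdist h \<xi> (\<lambda>_. m) + (m - c)\<^sup>2"
      using indep_sqdist_cond_normalize[OF \<xi> indep f, of c] indep_sqdist_split[OF \<xi> indep h(2) LC_const, of c]
        sqdist_const_dens[OF h(2)] by (simp add: h_def m_def)
    also have "\<dots> \<le> sqdist h \<xi> (\<lambda>_. m) + sqdist h (\<lambda>_. m) e"
      using cond_normalized_sqdist_const_ge[OF h(1) e, of m] by (simp add: c_def)
    also have "\<dots> = sqdist h \<xi> e" using indep_sqdist_split[OF \<xi> indep h(2) e] by (simp add: m_def)
    also have "\<dots> \<le> \<rho>\<^sub>D (\<lambda>x. (\<xi> x - e x)\<^sup>2)"
      using Lp_of_Lp_double[OF \<xi>] e by (intro rhoD_ge[OF _ h(2)] Lp_power2_diff) (auto simp: LC_iff)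
    finally show ?thesis .
  qed
  hence "\<rho>\<^sub>D (\<lambda>x. (\<xi> x - c)\<^sup>2) \<le> \<rho>\<^sub>D (\<lambda>x. (\<xi> x - e x)\<^sup>2)" by (rule rhoD_least)
  hence "is_cond_min M C eps \<rho> \<xi> (\<lambda>_. c)"
    using cond_min_le[OF cond_rho_is_cond_min[OF \<xi>] Lp_of_Lp_double[OF \<xi>]]
    by (intro cond_minI LC_const) (auto simp: e_def intro: order_trans)
  from cond_rho_unique[OF \<xi> this] show ?thesis by (intro exI[of _ c]) (auto elim!: eventually_mono)
qed

end


theorem proposition4:
  fixes M C :: "'a measure" and eps :: real and \<rho> :: "('a \<Rightarrow> real) \<Rightarrow> real"
    and \<xi> :: "'a \<Rightarrow> real"
  assumes "prob_space M" and "complete_measure M"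
    and "0 < eps" and "eps < 1"
    and "subalgebra M C"
    and "sublinear_op M eps \<rho>"
    and "standing_assm M eps \<rho>"
    and "stable M C eps \<rho>" and "proper M eps \<rho>"
    and "\<xi> \<in> Lp M (4 + 2*eps)"
  shows
    "(\<forall>C1 C2. (AE x in M. C1 \<le> \<xi> x \<and> \<xi> x \<le> C2) \<longrightarrow>
        (AE x in M. C1 \<le> cond_rho M C eps \<rho> \<xi> x \<and> cond_rho M C eps \<rho> \<xi> x \<le> C2))
   \<and> (\<forall>l::real. AE x in M. cond_rho M C eps \<rho> (\<lambda>y. l * \<xi> y) x = l * cond_rho M C eps \<rho> \<xi> x)
   \<and> (\<forall>\<eta>0\<in>Lp_sub M C (2+eps).
        (AE x in M. cond_rho M C eps \<rho> (\<lambda>y. \<xi> y + \<eta>0 y) x = cond_rho M C eps \<rho> \<xi> x + \<eta>0 x)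
      \<and> is_cond_min M C eps \<rho> (\<lambda>y. \<xi> y + \<eta>0 y) (\<lambda>y. cond_rho M C eps \<rho> \<xi> y + \<eta>0 y)
      \<and> (\<forall>\<eta>. is_cond_min M C eps \<rho> (\<lambda>y. \<xi> y + \<eta>0 y) \<eta> \<longrightarrow>
            (AE x in M. \<eta> x = cond_rho M C eps \<rho> \<xi> x + \<eta>0 x)))
   \<and> ((\<forall>f\<in>dens M eps \<rho>. prob_space.indep_set (dens_meas M f)
          {\<xi> -` A \<inter> space M | A. A \<in> sets borel} (sets C))
      \<longrightarrow> (\<exists>c. AE x in M. cond_rho M C eps \<rho> \<xi> x = c))"
proof -
  interpret stable_proper M eps \<rho> C
    using assms(1,3-9)
    by (simp add: stable_proper_def stable_proper_axioms_def compact_dens_def compact_dens_axioms_def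
        sublinear_expectation_def)
  note \<xi> = assms(10)
  show ?thesis
  proof (intro conjI allI impI ballI)
    show "AE x in M. C1 \<le> \<rho>\<^sub>C \<xi> x \<and> \<rho>\<^sub>C \<xi> x \<le> C2" if "AE x in M. C1 \<le> \<xi> x \<and> \<xi> x \<le> C2" for C1 C2
      using cond_rho_bounds[OF \<xi> that] .
    show "AE x in M. \<rho>\<^sub>C (\<lambda>y. l * \<xi> y) x = l * \<rho>\<^sub>C \<xi> x" for l
      using cond_rho_cmult[OF \<xi>] .
    show "\<exists>c. AE x in M. \<rho>\<^sub>C \<xi> x = c" if "\<forall>f\<in>D. prob_space.indep_set (dens_meas M f)
          {\<xi> -` A \<inter> space M | A. A \<in> sets borel} (sets C)"
      using cond_rho_const_if_indep[OF \<xi>] that by (simp add: indep_of_C_def)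
  qed (use cond_rho_add_LC[OF \<xi>] in auto)
qed

end
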